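(* Let $\alpha_1,\alpha_2,\beta_2,\beta_3,\beta_4,\delta_1,\delta_2,\delta_4>0$, $\rho>0$, and $i\in C(\mathbb{R}_+,[0,i_M])$ $\rho$-periodic with $\frac1\rho\int_0^\rho i=1$. Consider the system $$u_1'=u_1(1-u_1-\alpha_1u_2-\delta_1u_3),\quad u_2'=\beta_2u_2(1-u_2-\alpha_2u_1-\delta_2u_4),\quad u_3'=\beta_3(u_2-u_3),\quad u_4'=\beta_4(i(t)-u_4-\delta_4u_4u_2).$$ Let $w$ be the unique $\rho$-periodic solution of $w'=\beta_4(i(t)-w)$. Then $(1,0,0,w(t))$ is a $\rho$-periodic solution of the system; it is (uniformly) asymptotically stable if $\alpha_2+\delta_2>1$ and unstable if $\alpha_2+\delta_2<1$.
   Context: $\mathbb{R}_+=[0,\infty)$. Stability/instability is in the Lyapunov sense. *)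

theory Defs
  imports "HOL-Analysis.Analysis"
begin

type_synonym R4 = "real \<times> real \<times> real \<times> real"

definition sysF ::
  "real \<Rightarrow> real \<Rightarrow> real \<Rightarrow> real \<Rightarrow> real \<Rightarrow> real \<Rightarrow> real \<Rightarrow> real \<Rightarrow> (real \<Rightarrow> real)
   \<Rightarrow> real \<Rightarrow> R4 \<Rightarrow> R4" where
  "sysF a1 a2 b2 b3 b4 d1 d2 d4 i t u =
     (case u of (u1, u2, u3, u4) \<Rightarrow>
       (u1 * (1 - u1 - a1 * u2 - d1 * u3),
        b2 * u2 * (1 - u2 - a2 * u1 - d2 * u4),
        b3 * (u2 - u3),
        b4 * (i t - u4 - d4 * u4 * u2)))"

definition solves_on :: "(real \<Rightarrow> 'a::real_normed_vector \<Rightarrow> 'a) \<Rightarrow> (real \<Rightarrow> 'a) \<Rightarrow> real set \<Rightarrow> bool" where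
  "solves_on f x S \<longleftrightarrow> (\<forall>t\<in>S. (x has_vector_derivative f t (x t)) (at t within S))"

definition unif_stable :: "(real \<Rightarrow> 'a::real_normed_vector \<Rightarrow> 'a) \<Rightarrow> (real \<Rightarrow> 'a) \<Rightarrow> bool" where
  "unif_stable f p \<longleftrightarrow>
    (\<forall>\<epsilon>>0. \<exists>\<delta>>0. \<forall>t0\<ge>0.
       (\<forall>x0. norm (x0 - p t0) < \<delta> \<longrightarrow> (\<exists>x. x t0 = x0 \<and> solves_on f x {t0..})) \<and>
       (\<forall>x T. solves_on f x {t0..T} \<and> norm (x t0 - p t0) < \<delta> \<longrightarrow>
              (\<forall>t\<in>{t0..T}. norm (x t - p t) < \<epsilon>)))"

definition unif_asym_stable :: "(real \<Rightarrow> 'a::real_normed_vector \<Rightarrow> 'a) \<Rightarrow> (real \<Rightarrow> 'a) \<Rightarrow> bool" where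
  "unif_asym_stable f p \<longleftrightarrow> unif_stable f p \<and>
    (\<exists>\<delta>0>0. \<forall>\<epsilon>>0. \<exists>T>0. \<forall>t0\<ge>0. \<forall>x.
       solves_on f x {t0..} \<and> norm (x t0 - p t0) < \<delta>0 \<longrightarrow>
       (\<forall>t\<ge>t0 + T. norm (x t - p t) < \<epsilon>))"

text \<open>Lyapunov instability (negation of (non-uniform) Lyapunov stability): for some initial
  time t0 and some eps, arbitrarily close initial data give solutions leaving the eps-ball.\<close>
definition lyap_unstable :: "(real \<Rightarrow> 'a::real_normed_vector \<Rightarrow> 'a) \<Rightarrow> (real \<Rightarrow> 'a) \<Rightarrow> bool" where
  "lyap_unstable f p \<longleftrightarrow>
    (\<exists>t0\<ge>0. \<exists>\<epsilon>>0. \<forall>\<delta>>0. \<exists>x T. solves_on f x {t0..T} \<and> norm (x t0 - p t0) < \<delta> \<and>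
        (\<exists>t\<in>{t0..T}. norm (x t - p t) \<ge> \<epsilon>))"

end

theory Submission
  imports Defs "HOL-Analysis.Analysis"
begin

text \<open>The constant \<open>(1, 0, 0, w)\<close> solves the system because \<open>w\<close> solves the last equation. Near it,
  \<open>u\<^sub>1 - 1\<close>, \<open>u\<^sub>3\<close> and \<open>u\<^sub>4 - w\<close> are damped at fixed rates, while
  \<open>u\<^sub>2' \<approx> b\<^sub>2 u\<^sub>2 (1 - a\<^sub>2 - d\<^sub>2 w(t))\<close>. Since \<open>w\<close> has mean \<open>1\<close>, this rate is
  \<open>b\<^sub>2 (1 - a\<^sub>2 - d\<^sub>2)\<close> plus \<open>b\<^sub>2 d\<^sub>2 (1 - w)\<close>, whose primitive is periodic and hence bounded.
  For \<open>a\<^sub>2 + d\<^sub>2 > 1\<close> explicit exponentially decaying envelopes for the four deviations are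
  barriers for the flow (a comparison principle), which gives uniform asymptotic stability; for
  \<open>a\<^sub>2 + d\<^sub>2 < 1\<close> an exponentially growing lower envelope for \<open>u\<^sub>2\<close> pushes every solution with
  \<open>u\<^sub>2 > 0\<close> out of a fixed neighbourhood. Solutions starting near the periodic solution exist
  globally because they solve a truncated, globally Lipschitz system until they leave that
  neighbourhood.\<close>

section \<open>Comparison principle\<close>

lemma first_time_in_closed:
  fixes S :: "real set"
  assumes "closed S" "t1 \<in> S" "a \<le> t1"
  obtains T where "T \<in> S" "a \<le> T" "T \<le> t1" "\<And>s. a \<le> s \<Longrightarrow> s < T \<Longrightarrow> s \<notin> S"
proof
  let ?S = "S \<inter> {a..t1}"
  have "?S \<noteq> {}" "bdd_below ?S" "closed ?S" using assms by auto
  then have T: "Inf ?S \<in> ?S" by (rule closed_contains_Inf)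
  then show "Inf ?S \<in> S" "a \<le> Inf ?S" "Inf ?S \<le> t1" by auto
  fix s assume "a \<le> s" "s < Inf ?S"
  with T have "s \<notin> ?S" and "s \<le> t1" using cInf_lower[of s ?S] by fastforce+
  with \<open>a \<le> s\<close> show "s \<notin> S" by auto
qed

lemma continuous_on_le_at_right_end:
  fixes f :: "real \<Rightarrow> real"
  assumes "continuous_on {a..b} f" "a < b" "\<And>s. s \<in> {a..<b} \<Longrightarrow> f s \<le> c"
  shows "f b \<le> c"
proof -
  have "closed {s \<in> {a..b}. f s \<le> c}"
    using assms(1) by (intro continuous_on_closed_Collect_le) auto
  moreover have "{a..<b} \<subseteq> {s \<in> {a..b}. f s \<le> c}" using assms(3) by auto
  ultimately have "closure {a..<b} \<subseteq> {s \<in> {a..b}. f s \<le> c}" by (simp add: closure_minimal)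
  moreover have "b \<in> closure {a..<b}" using assms(2) by simp
  ultimately show ?thesis by blast
qed

lemma first_crossing_time:
  fixes g :: "real \<Rightarrow> real"
  assumes g: "continuous_on {t0..} g" and "g t0 < r" "t0 \<le> t1" "r \<le> g t1"
  obtains T where "t0 < T" "T \<le> t1" "g T = r" "\<And>s. s \<in> {t0..<T} \<Longrightarrow> g s < r"
proof -
  have closed: "closed {s \<in> {t0..}. r \<le> g s}"
    using g by (intro continuous_on_closed_Collect_le) auto
  obtain T where T: "T \<in> {s \<in> {t0..}. r \<le> g s}" "t0 \<le> T" "T \<le> t1"
      and before: "\<And>s. t0 \<le> s \<Longrightarrow> s < T \<Longrightarrow> \<not> r \<le> g s"
    using first_time_in_closed[OF closed, of t1 t0] assms(3,4) by auto
  have "t0 < T" using T assms(2) by (cases "T = t0") auto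
  moreover have "g T \<le> r"
    using \<open>t0 < T\<close> before continuous_on_subset[OF g]
    by (intro continuous_on_le_at_right_end[of t0 T g]) (auto simp: not_le intro: less_imp_le)
  ultimately show ?thesis using T before that by (fastforce simp: not_le)
qed

lemma barrier:
  fixes \<phi> \<phi>' :: "'j \<Rightarrow> real \<Rightarrow> real"
  assumes fin: "finite J" and "a \<le> b"
    and D: "\<And>j t. j \<in> J \<Longrightarrow> t \<in> {a..b} \<Longrightarrow> (\<phi> j has_real_derivative \<phi>' j t) (at t within {a..b})"
    and init: "\<And>j. j \<in> J \<Longrightarrow> \<phi> j a < 0"
    and cross: "\<And>j t. j \<in> J \<Longrightarrow> t \<in> {a..b} \<Longrightarrow> (\<forall>k\<in>J. \<phi> k t \<le> 0) \<Longrightarrow> \<phi> j t = 0 \<Longrightarrow> \<phi>' j t < 0"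
  shows "\<forall>j\<in>J. \<forall>t\<in>{a..b}. \<phi> j t < 0"
proof (rule ccontr)
  assume violated: "\<not> ?thesis"
  define S where "S = (\<Union>j\<in>J. {t \<in> {a..b}. 0 \<le> \<phi> j t})"
  have cont: "continuous_on {a..b} (\<phi> j)" if "j \<in> J" for j
    using D[OF that] by (meson DERIV_continuous continuous_on_eq_continuous_within)
  have "closed S" unfolding S_def
    by (intro closed_UN fin ballI continuous_on_closed_Collect_le cont) auto
  obtain t1 where "t1 \<in> S" using violated unfolding S_def by force
  then have "a \<le> t1" unfolding S_def by auto
  obtain T where "T \<in> S" and before: "\<And>s. a \<le> s \<Longrightarrow> s < T \<Longrightarrow> s \<notin> S"
    using first_time_in_closed[OF \<open>closed S\<close> \<open>t1 \<in> S\<close> \<open>a \<le> t1\<close>] by blast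
  then obtain j where j: "j \<in> J" "T \<in> {a..b}" "0 \<le> \<phi> j T" unfolding S_def by auto
  have neg_before: "\<phi> k s < 0" if "k \<in> J" "a \<le> s" "s < T" for k s
    using before[OF that(2,3)] that j(2) unfolding S_def by fastforce
  have "a < T" using j init[OF j(1)] by (cases "T = a") auto
  have le0: "\<forall>k\<in>J. \<phi> k T \<le> 0"
  proof
    fix k assume "k \<in> J"
    have "continuous_on {a..T} (\<phi> k)" using j(2) by (intro continuous_on_subset[OF cont[OF \<open>k \<in> J\<close>]]) auto
    then show "\<phi> k T \<le> 0"
      using \<open>a < T\<close> by (rule continuous_on_le_at_right_end) (use neg_before[OF \<open>k \<in> J\<close>] in fastforce)
  qed
  have "\<phi> j T = 0" using le0 j by force
  then have "\<phi>' j T < 0" using cross[OF j(1,2) le0] by blast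
  then obtain d where "d > 0" and d: "\<And>h. h > 0 \<Longrightarrow> T - h \<in> {a..b} \<Longrightarrow> h < d \<Longrightarrow> \<phi> j T < \<phi> j (T - h)"
    using has_real_derivative_neg_dec_left[OF D[OF j(1,2)]] by blast
  define h where "h = min d (T - a) / 2"
  have h: "h > 0" "h < d" "h < T - a" using \<open>d > 0\<close> \<open>a < T\<close> unfolding h_def by (auto simp: min_def)
  then have "T - h \<in> {a..b}" "a \<le> T - h" "T - h < T" using j(2) by auto
  then have "\<phi> j T < \<phi> j (T - h)" "\<phi> j (T - h) < 0"
    using d[OF h(1) _ h(2)] neg_before[OF j(1)] by simp_all
  then show False using \<open>\<phi> j T = 0\<close> by simp
qed

lemma abs_compare_iff_square_diff:
  fixes y B :: real
  assumes "0 < B"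
  shows "\<bar>y\<bar> \<le> B \<longleftrightarrow> y\<^sup>2 - B\<^sup>2 \<le> 0" "\<bar>y\<bar> < B \<longleftrightarrow> y\<^sup>2 - B\<^sup>2 < 0" "\<bar>y\<bar> = B \<longleftrightarrow> y\<^sup>2 - B\<^sup>2 = 0"
proof -
  have "\<bar>y\<bar> \<le> B \<longleftrightarrow> \<bar>y\<bar>\<^sup>2 \<le> B\<^sup>2" "\<bar>y\<bar> = B \<longleftrightarrow> \<bar>y\<bar>\<^sup>2 = B\<^sup>2"
    using assms power_mono_iff[of "\<bar>y\<bar>" B 2] power2_eq_iff_nonneg[of "\<bar>y\<bar>" B] by simp_all
  moreover have "\<bar>y\<bar> < B \<longleftrightarrow> \<bar>y\<bar>\<^sup>2 < B\<^sup>2"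
    using assms power_mono_iff[of B "\<bar>y\<bar>" 2] by (simp add: not_le[symmetric])
  ultimately show "\<bar>y\<bar> \<le> B \<longleftrightarrow> y\<^sup>2 - B\<^sup>2 \<le> 0" "\<bar>y\<bar> < B \<longleftrightarrow> y\<^sup>2 - B\<^sup>2 < 0" "\<bar>y\<bar> = B \<longleftrightarrow> y\<^sup>2 - B\<^sup>2 = 0"
    by simp_all
qed

lemma abs_barrier:
  fixes y y' B B' :: "'j \<Rightarrow> real \<Rightarrow> real"
  assumes "finite J" "a \<le> b"
    and dy: "\<And>j t. j \<in> J \<Longrightarrow> t \<in> {a..b} \<Longrightarrow> (y j has_real_derivative y' j t) (at t within {a..b})"
    and dB: "\<And>j t. j \<in> J \<Longrightarrow> t \<in> {a..b} \<Longrightarrow> (B j has_real_derivative B' j t) (at t within {a..b})"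
    and pos: "\<And>j t. j \<in> J \<Longrightarrow> t \<in> {a..b} \<Longrightarrow> 0 < B j t"
    and init: "\<And>j. j \<in> J \<Longrightarrow> \<bar>y j a\<bar> < B j a"
    and cross: "\<And>j t. j \<in> J \<Longrightarrow> t \<in> {a..b} \<Longrightarrow> (\<forall>k\<in>J. \<bar>y k t\<bar> \<le> B k t) \<Longrightarrow> \<bar>y j t\<bar> = B j t
      \<Longrightarrow> y j t * y' j t < B j t * B' j t"
  shows "\<forall>j\<in>J. \<forall>t\<in>{a..b}. \<bar>y j t\<bar> < B j t"
proof -
  note sq = abs_compare_iff_square_diff[OF pos]
  have "\<forall>j\<in>J. \<forall>t\<in>{a..b}. (\<lambda>j t. (y j t)\<^sup>2 - (B j t)\<^sup>2) j t < 0"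
  proof (rule barrier[where \<phi>' = "\<lambda>j t. 2 * (y j t * y' j t) - 2 * (B j t * B' j t)"])
    show "((\<lambda>t. (y j t)\<^sup>2 - (B j t)\<^sup>2) has_real_derivative 2 * (y j t * y' j t) - 2 * (B j t * B' j t))
        (at t within {a..b})" if "j \<in> J" "t \<in> {a..b}" for j t
      using dy[OF that] dB[OF that] by (auto intro!: derivative_eq_intros)
  next
    show "(y j a)\<^sup>2 - (B j a)\<^sup>2 < 0" if "j \<in> J" for j
      using sq[OF that, of a] init[OF that] \<open>a \<le> b\<close> by simp
  next
    fix j t assume jt: "j \<in> J" "t \<in> {a..b}" and "\<forall>k\<in>J. (y k t)\<^sup>2 - (B k t)\<^sup>2 \<le> 0"
      and "(y j t)\<^sup>2 - (B j t)\<^sup>2 = 0"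
    then have "\<forall>k\<in>J. \<bar>y k t\<bar> \<le> B k t" "\<bar>y j t\<bar> = B j t" using sq jt(2) by auto
    then show "2 * (y j t * y' j t) - 2 * (B j t * B' j t) < 0" using cross[OF jt] by simp
  qed (fact assms)+
  then show ?thesis using sq by simp
qed

section \<open>Global solutions of Lipschitz equations\<close>

text \<open>The Picard map on bounded continuous functions; the upper limit of integration is clamped to
  \<open>[a, b]\<close> so that the result is again bounded and continuous on the whole real line.\<close>
definition picard_map :: "real \<Rightarrow> real \<Rightarrow> (real \<Rightarrow> 'a::banach \<Rightarrow> 'a) \<Rightarrow> 'a \<Rightarrow> (real \<Rightarrow>\<^sub>C 'a) \<Rightarrow> real \<Rightarrow> 'a"
  where "picard_map a b G x0 f t = x0 + integral {a..max a (min b t)} (\<lambda>s. G s (f s))"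

context
  fixes a b :: real and G :: "real \<Rightarrow> 'a::banach \<Rightarrow> 'a"
  assumes ab: "a \<le> b"
    and Gc: "\<And>f. continuous_on {a..b} f \<Longrightarrow> continuous_on {a..b} (\<lambda>s. G s (f s))"
begin

lemma picard_map_bcontfun: "picard_map a b G x0 f \<in> bcontfun"
proof -
  let ?I = "\<lambda>u. x0 + integral {a..u} (\<lambda>s. G s (f s))"
  have I: "continuous_on {a..b} ?I"
    by (intro continuous_intros indefinite_integral_continuous_1 integrable_continuous_real Gc) simp
  have clamp: "continuous_on UNIV (\<lambda>t. max a (min b t))" "\<And>t. max a (min b t) \<in> {a..b}"
    by (intro continuous_intros) (use ab in auto)
  have "continuous_on UNIV (picard_map a b G x0 f)"
    unfolding picard_map_def using continuous_on_compose2[OF I clamp(1)] clamp(2) by (simp add: image_subset_iff)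
  moreover have "range (picard_map a b G x0 f) \<subseteq> ?I ` {a..b}"
    unfolding picard_map_def using clamp(2) by auto
  then have "bounded (range (picard_map a b G x0 f))"
    using compact_imp_bounded[OF compact_continuous_image[OF I compact_Icc]] bounded_subset by blast
  ultimately show ?thesis unfolding bcontfun_def by simp
qed

lemma picard_map_contraction:
  assumes L: "0 \<le> L" and Lip: "\<And>t u v. t \<in> {a..b} \<Longrightarrow> norm (G t u - G t v) \<le> L * norm (u - v)"
  shows "dist (Bcontfun (picard_map a b G x0 f)) (Bcontfun (picard_map a b G x0 g)) \<le> (b - a) * L * dist f g"
proof (rule dist_bound)
  fix t
  define c where "c = max a (min b t)"
  have c: "a \<le> c" "{a..c} \<subseteq> {a..b}" unfolding c_def using ab by auto
  have cont: "continuous_on {a..c} (\<lambda>s. G s (h s))" for h :: "real \<Rightarrow>\<^sub>C 'a"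
    using c(2) by (intro continuous_on_subset[OF Gc]) simp_all
  have "dist (Bcontfun (picard_map a b G x0 f) t) (Bcontfun (picard_map a b G x0 g) t)
      = norm (integral {a..c} (\<lambda>s. G s (f s)) - integral {a..c} (\<lambda>s. G s (g s)))"
    by (simp add: Bcontfun_inverse[OF picard_map_bcontfun] dist_norm picard_map_def c_def)
  also have "\<dots> = norm (integral {a..c} (\<lambda>s. G s (f s) - G s (g s)))"
    using cont[of f] cont[of g] by (simp add: integral_diff integrable_continuous_real)
  also have "\<dots> \<le> (L * dist f g) * (c - a)"
  proof (rule integral_bound)
    show "continuous_on {a..c} (\<lambda>s. G s (f s) - G s (g s))" using cont by (intro continuous_intros)
    fix s assume "s \<in> {a..c}"
    then have "norm (G s (f s) - G s (g s)) \<le> L * norm (f s - g s)" using c by (intro Lip) auto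
    also have "\<dots> \<le> L * dist f g" using dist_bounded[of f s g] L by (intro mult_left_mono) (auto simp: dist_norm)
    finally show "norm (G s (f s) - G s (g s)) \<le> L * dist f g" .
  qed (use c in auto)
  also have "\<dots> \<le> (L * dist f g) * (b - a)" using c L by (intro mult_left_mono) auto
  finally show "dist (Bcontfun (picard_map a b G x0 f) t) (Bcontfun (picard_map a b G x0 g) t)
      \<le> (b - a) * L * dist f g" by (simp only: mult_ac)
qed

lemma picard_local_solution:
  assumes L: "0 \<le> L" "(b - a) * L < 1"
    and Lip: "\<And>t u v. t \<in> {a..b} \<Longrightarrow> norm (G t u - G t v) \<le> L * norm (u - v)"
  obtains x where "continuous_on {a..b} x" "\<And>t. t \<in> {a..b} \<Longrightarrow> x t = x0 + integral {a..t} (\<lambda>s. G s (x s))"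
proof -
  have "0 \<le> (b - a) * L" using L(1) ab by simp
  moreover have "\<forall>f g. dist (Bcontfun (picard_map a b G x0 f)) (Bcontfun (picard_map a b G x0 g))
      \<le> (b - a) * L * dist f g"
    by (intro allI picard_map_contraction L(1) Lip)
  ultimately have "\<exists>!f. Bcontfun (picard_map a b G x0 f) = f" using L(2) by (intro banach_fix_type)
  then obtain f where fixpoint: "Bcontfun (picard_map a b G x0 f) = f" by (rule ex1E)
  have "apply_bcontfun f = apply_bcontfun (Bcontfun (picard_map a b G x0 f))" by (simp only: fixpoint)
  also have "\<dots> = picard_map a b G x0 f" by (rule Bcontfun_inverse[OF picard_map_bcontfun])
  finally have eq: "apply_bcontfun f = picard_map a b G x0 f" .
  show ?thesis
  proof (rule that)
    show "continuous_on {a..b} (apply_bcontfun f)" by simp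
    fix t assume "t \<in> {a..b}"
    then have "max a (min b t) = t" by simp
    then show "apply_bcontfun f t = x0 + integral {a..t} (\<lambda>s. G s (apply_bcontfun f s))"
      using fun_cong[OF eq, of t] by (simp add: picard_map_def)
  qed
qed

end

lemma integral_equation_append:
  fixes g :: "real \<Rightarrow> 'a::banach"
  assumes "t0 \<le> a" "a \<le> b" "continuous_on {t0..b} g"
    and left: "\<And>t. t \<in> {t0..a} \<Longrightarrow> X t = x0 + integral {t0..t} g"
    and right: "\<And>t. t \<in> {a..b} \<Longrightarrow> X t = X a + integral {a..t} g"
    and "t \<in> {t0..b}"
  shows "X t = x0 + integral {t0..t} g"
proof (cases "t \<le> a")
  case False
  then have "g integrable_on {t0..t}"
    using assms by (intro integrable_continuous_real continuous_on_subset[OF assms(3)]) auto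
  then have "integral {t0..a} g + integral {a..t} g = integral {t0..t} g"
    using False assms by (intro Henstock_Kurzweil_Integration.integral_combine) auto
  then show ?thesis using left[of a] right[of t] False assms by (simp add: add.assoc)
qed (use assms in auto)

lemma integral_equation_has_vector_derivative:
  fixes g :: "real \<Rightarrow> 'a::banach"
  assumes g: "\<And>b. continuous_on {t0..b} g"
    and X: "\<And>t. t0 \<le> t \<Longrightarrow> X t = x0 + integral {t0..t} g" and "t0 \<le> t"
  shows "(X has_vector_derivative g t) (at t within {t0..})"
proof -
  have "((\<lambda>u. x0 + integral {t0..u} g) has_vector_derivative g t) (at t within {t0..t + 1})"
    using integral_has_vector_derivative[OF g, of t "t + 1"] \<open>t0 \<le> t\<close>
    by (auto intro!: derivative_eq_intros)
  then have "(X has_vector_derivative g t) (at t within {t0..t + 1})"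
    by (rule has_vector_derivative_transform[rotated 2]) (use X \<open>t0 \<le> t\<close> in auto)
  moreover have "at t within {t0..} = at t within {t0..t + 1}"
    by (rule at_within_nhd[of _ "{..<t + 1}"]) auto
  ultimately show ?thesis by simp
qed

locale glued_pieces =
  fixes G :: "real \<Rightarrow> 'a::banach \<Rightarrow> 'a" and t0 h :: real and s :: "nat \<Rightarrow> real"
    and piece :: "nat \<Rightarrow> real \<Rightarrow> 'a"
  assumes h: "0 < h" and grid: "\<And>n. s n = t0 + real n * h"
    and Gc: "\<And>f a b. t0 \<le> a \<Longrightarrow> continuous_on {a..b} f \<Longrightarrow> continuous_on {a..b} (\<lambda>s. G s (f s))"
    and piece_cont: "\<And>n. continuous_on {s n..s (Suc n)} (piece n)"
    and piece_sol: "\<And>n t. t \<in> {s n..s (Suc n)} \<Longrightarrow>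
      piece n t = piece n (s n) + integral {s n..t} (\<lambda>u. G u (piece n u))"
    and junction: "\<And>n. piece (Suc n) (s (Suc n)) = piece n (s (Suc n))"
begin

definition glued :: "real \<Rightarrow> 'a" where "glued t = piece (nat \<lfloor>(t - t0) / h\<rfloor>) t"

lemma grid_simps: "s 0 = t0" "s (Suc n) = s n + h" "t0 \<le> s n" "s n \<le> s (Suc n)"
  using h by (simp_all add: grid algebra_simps)

lemma glued_eq_piece:
  assumes "t \<in> {s n..s (Suc n)}"
  shows "glued t = piece n t"
proof (cases "t = s (Suc n)")
  case True
  then have "nat \<lfloor>(t - t0) / h\<rfloor> = Suc n" using h by (simp add: grid)
  then show ?thesis using junction True unfolding glued_def by simp
next
  case False
  then have "real n \<le> (t - t0) / h" "(t - t0) / h < real n + 1"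
    using assms h by (auto simp: grid field_simps)
  then have "nat \<lfloor>(t - t0) / h\<rfloor> = n" by linarith
  then show ?thesis unfolding glued_def by simp
qed

lemma glued_piece_equation:
  assumes "t \<in> {s n..s (Suc n)}"
  shows "glued t = glued (s n) + integral {s n..t} (\<lambda>u. G u (glued u))"
proof -
  have "integral {s n..t} (\<lambda>u. G u (glued u)) = integral {s n..t} (\<lambda>u. G u (piece n u))"
    using assms glued_eq_piece[of _ n] by (intro Henstock_Kurzweil_Integration.integral_cong) simp
  then show ?thesis
    using glued_eq_piece[OF assms] glued_eq_piece[of "s n" n] piece_sol[OF assms] grid_simps(4) by simp
qed

lemma glued_integral_equation_upto:
  "continuous_on {t0..s (Suc n)} glued
    \<and> (\<forall>t\<in>{t0..s (Suc n)}. glued t = glued t0 + integral {t0..t} (\<lambda>u. G u (glued u)))"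
proof (induction n)
  case 0
  have "continuous_on {s 0..s (Suc 0)} glued"
    using piece_cont by (rule continuous_on_eq) (erule glued_eq_piece[symmetric])
  then show ?case using glued_piece_equation[of _ 0] unfolding grid_simps(1) by blast
next
  case (Suc n)
  let ?a = "s (Suc n)" and ?b = "s (Suc (Suc n))"
  have "continuous_on {?a..?b} glued"
    using piece_cont by (rule continuous_on_eq) (erule glued_eq_piece[symmetric])
  then have "continuous_on ({t0..?a} \<union> {?a..?b}) glued"
    using Suc.IH by (intro continuous_on_closed_Un) auto
  then have cont: "continuous_on {t0..?b} glued"
    by (simp only: ivl_disj_un_two_touch(4)[OF grid_simps(3,4)])
  have "glued t = glued t0 + integral {t0..t} (\<lambda>u. G u (glued u))" if t: "t \<in> {t0..?b}" for t
  proof (rule integral_equation_append[where a = ?a and b = ?b])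
    show "glued t = glued t0 + integral {t0..t} (\<lambda>u. G u (glued u))" if "t \<in> {t0..?a}" for t
      using Suc.IH that by blast
    show "glued t = glued ?a + integral {?a..t} (\<lambda>u. G u (glued u))" if "t \<in> {?a..?b}" for t
      using glued_piece_equation that .
    show "continuous_on {t0..?b} (\<lambda>u. G u (glued u))" using Gc[OF order_refl cont] .
  qed (use grid_simps(3,4) t in auto)
  with cont show ?case by blast
qed

lemma glued_integral_equation:
  shows "\<And>b. continuous_on {t0..b} (\<lambda>u. G u (glued u))"
    and "\<And>t. t0 \<le> t \<Longrightarrow> glued t = glued t0 + integral {t0..t} (\<lambda>u. G u (glued u))"
proof -
  have beyond: "\<exists>n. b \<le> s (Suc n)" for b
  proof -
    obtain n where "(b - t0) / h < real n" using reals_Archimedean2 by blast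
    then show ?thesis using h by (intro exI[of _ n]) (simp add: grid field_simps)
  qed
  show "continuous_on {t0..b} (\<lambda>u. G u (glued u))" for b
  proof -
    obtain n where "b \<le> s (Suc n)" using beyond by blast
    then have "{t0..b} \<subseteq> {t0..s (Suc n)}" by auto
    with glued_integral_equation_upto[of n] show ?thesis
      by (intro Gc[OF order_refl]) (blast intro: continuous_on_subset)
  qed
  show "glued t = glued t0 + integral {t0..t} (\<lambda>u. G u (glued u))" if "t0 \<le> t" for t
  proof -
    obtain n where "t \<le> s (Suc n)" using beyond by blast
    then have "t \<in> {t0..s (Suc n)}" using that by simp
    with glued_integral_equation_upto[of n] show ?thesis by blast
  qed
qed

end

lemma global_solution_lipschitz:
  fixes G :: "real \<Rightarrow> 'a::banach \<Rightarrow> 'a"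
  assumes L: "0 \<le> L"
    and Gc: "\<And>f a b. t0 \<le> a \<Longrightarrow> continuous_on {a..b} f \<Longrightarrow> continuous_on {a..b} (\<lambda>s. G s (f s))"
    and Lip: "\<And>t u v. t0 \<le> t \<Longrightarrow> norm (G t u - G t v) \<le> L * norm (u - v)"
  obtains x where "x t0 = x0" "\<And>t. t0 \<le> t \<Longrightarrow> (x has_vector_derivative G t (x t)) (at t within {t0..})"
proof -
  define h where "h = 1 / (2 * (L + 1))"
  have h: "h > 0" "h * L < 1" using L by (auto simp: h_def field_simps)
  define local_sol where "local_sol a y x \<longleftrightarrow> continuous_on {a..a + h} x
      \<and> (\<forall>t\<in>{a..a + h}. x t = y + integral {a..t} (\<lambda>s. G s (x s)))" for a y x
  have local_sol: "local_sol a y (SOME x. local_sol a y x)" if a: "t0 \<le> a" for a y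
  proof -
    obtain x where "continuous_on {a..a + h} x" "\<And>t. t \<in> {a..a + h} \<Longrightarrow> x t = y + integral {a..t} (\<lambda>s. G s (x s))"
      using h L by (rule_tac picard_local_solution[of a "a + h" G L y]) (use a in \<open>auto intro: Gc Lip\<close>)
    then have "\<exists>x. local_sol a y x" unfolding local_sol_def by blast
    then show ?thesis by (rule someI_ex)
  qed
  have local_sol_start: "x a = y" if "local_sol a y x" for a y x
    using that h unfolding local_sol_def by auto
  define s where "s n = t0 + real n * h" for n
  have s: "s (Suc n) = s n + h" "t0 \<le> s n" for n using h by (simp_all add: s_def algebra_simps)
  define piece where "piece = rec_nat (SOME x. local_sol t0 x0 x)
      (\<lambda>n x. SOME x'. local_sol (s (Suc n)) (x (s (Suc n))) x')"
  have piece0: "local_sol (s 0) x0 (piece 0)" using local_sol[of t0] by (simp add: piece_def s_def)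
  have pieceS: "local_sol (s (Suc n)) (piece n (s (Suc n))) (piece (Suc n))" for n
    using local_sol[OF s(2)] by (simp add: piece_def)
  have pieces: "local_sol (s n) (piece n (s n)) (piece n)" for n
  proof (cases n)
    case 0
    then show ?thesis using piece0 local_sol_start[OF piece0] by simp
  next
    case (Suc m)
    then show ?thesis using pieceS[of m] local_sol_start[OF pieceS[of m]] by simp
  qed
  have piece_cont: "continuous_on {s n..s (Suc n)} (piece n)"
    and piece_sol: "\<And>t. t \<in> {s n..s (Suc n)} \<Longrightarrow>
      piece n t = piece n (s n) + integral {s n..t} (\<lambda>u. G u (piece n u))" for n
    using pieces[of n] unfolding local_sol_def s(1) by blast+
  have junction: "piece (Suc n) (s (Suc n)) = piece n (s (Suc n))" for n
    using local_sol_start[OF pieceS] .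
  interpret glued_pieces G t0 h s piece
    using h(1) s_def Gc piece_cont piece_sol junction by unfold_locales
  show ?thesis
  proof (rule that[of glued])
    show "glued t0 = x0" using glued_eq_piece[of t0 0] local_sol_start[OF piece0] h by (simp add: s_def)
    show "(glued has_vector_derivative G t (glued t)) (at t within {t0..})" if "t0 \<le> t" for t
      using integral_equation_has_vector_derivative[OF glued_integral_equation that] by simp
  qed
qed

lemma periodic_shift_nat:
  fixes f :: "real \<Rightarrow> 'a"
  assumes per: "\<And>t. t \<ge> 0 \<Longrightarrow> f (t + \<rho>) = f t" and "\<rho> \<ge> 0" "t \<ge> 0"
  shows "f (t + real n * \<rho>) = f t"
proof (induction n)
  case (Suc n)
  have "f (t + real n * \<rho> + \<rho>) = f (t + real n * \<rho>)" using assms by (intro per) simp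
  then show ?case using Suc by (simp add: algebra_simps)
qed simp

lemma periodic_bounded:
  fixes f :: "real \<Rightarrow> real"
  assumes "\<rho> > 0" and per: "\<And>t. t \<ge> 0 \<Longrightarrow> f (t + \<rho>) = f t" and cont: "continuous_on {0..\<rho>} f"
  obtains M where "\<And>t. t \<ge> 0 \<Longrightarrow> \<bar>f t\<bar> \<le> M"
proof -
  have "bounded (f ` {0..\<rho>})" by (rule compact_imp_bounded[OF compact_continuous_image[OF cont compact_Icc]])
  then obtain M where "\<forall>x\<in>f ` {0..\<rho>}. norm x \<le> M" by (auto simp: bounded_iff)
  then have M: "\<And>s. s \<in> {0..\<rho>} \<Longrightarrow> \<bar>f s\<bar> \<le> M" by auto
  have "\<bar>f t\<bar> \<le> M" if "t \<ge> 0" for t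
  proof -
    define n where "n = nat \<lfloor>t / \<rho>\<rfloor>"
    have "real n = of_int \<lfloor>t / \<rho>\<rfloor>" using that \<open>\<rho> > 0\<close> by (simp add: n_def)
    then have "real n \<le> t / \<rho>" "t / \<rho> < real n + 1" by linarith+
    then have "t - real n * \<rho> \<in> {0..\<rho>}" using \<open>\<rho> > 0\<close> by (auto simp: field_simps)
    moreover have "f t = f (t - real n * \<rho>)"
      using periodic_shift_nat[where f = f, OF per, of "t - real n * \<rho>" n] \<open>\<rho> > 0\<close> calculation by simp
    ultimately show ?thesis using M by simp
  qed
  then show ?thesis by (rule that)
qed

lemma periodic_zero_mean_primitive:
  fixes f :: "real \<Rightarrow> real"
  assumes "\<rho> > 0" and per: "\<And>t. t \<ge> 0 \<Longrightarrow> f (t + \<rho>) = f t" and cont: "continuous_on {0..} f"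
    and mean: "integral {0..\<rho>} f = 0" and "t \<ge> 0"
  shows "integral {0..t + \<rho>} f = integral {0..t} f"
proof -
  have "f integrable_on {0..t + \<rho>}"
    by (rule integrable_continuous_real, rule continuous_on_subset[OF cont]) auto
  then have "integral {0..t + \<rho>} f = integral {0..\<rho>} f + integral {\<rho>..t + \<rho>} f"
    using \<open>\<rho> > 0\<close> \<open>t \<ge> 0\<close> by (simp add: Henstock_Kurzweil_Integration.integral_combine)
  also have "integral {\<rho>..t + \<rho>} f = integral {0..t} (f \<circ> (+) \<rho>)"
    using integral_shift_Icc_real[of 0 t f \<rho>] by simp
  also have "\<dots> = integral {0..t} f"
    using per by (intro Henstock_Kurzweil_Integration.integral_cong) (simp add: add.commute)
  finally show ?thesis using mean by simp
qed

lemma norm_4tuple: "norm ((a::real), (b::real), (c::real), (d::real)) = sqrt (a\<^sup>2 + b\<^sup>2 + c\<^sup>2 + d\<^sup>2)"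
  by (simp add: norm_Pair add.assoc)

lemma norm_4tuple_le_sum_abs: "norm ((a::real), (b::real), (c::real), (d::real)) \<le> \<bar>a\<bar> + \<bar>b\<bar> + \<bar>c\<bar> + \<bar>d\<bar>"
  using norm_Pair_le[of a "(b, c, d)"] norm_Pair_le[of b "(c, d)"] norm_Pair_le[of c d] by simp

lemma abs_le_norm_4tuple:
  fixes a b c d :: real
  shows "\<bar>a\<bar> \<le> norm (a, b, c, d)" "\<bar>b\<bar> \<le> norm (a, b, c, d)"
    "\<bar>c\<bar> \<le> norm (a, b, c, d)" "\<bar>d\<bar> \<le> norm (a, b, c, d)"
  unfolding norm_4tuple by (auto intro!: real_le_rsqrt simp del: real_sqrt_le_iff)

definition clamp :: "real \<Rightarrow> real \<Rightarrow> real" where "clamp K y = max (- K) (min K y)"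

lemma abs_clamp_le: "0 \<le> K \<Longrightarrow> \<bar>clamp K y\<bar> \<le> K"
  by (auto simp: clamp_def)

lemma abs_clamp_diff_le: "\<bar>clamp K y - clamp K z\<bar> \<le> \<bar>y - z\<bar>"
  by (auto simp: clamp_def max_def min_def)

lemma clamp_eq_self: "\<bar>y\<bar> \<le> K \<Longrightarrow> clamp K y = y"
  by (auto simp: clamp_def)

lemma continuous_on_clamp [continuous_intros]: "continuous_on S f \<Longrightarrow> continuous_on S (\<lambda>s. clamp K (f s))"
  unfolding clamp_def by (intro continuous_intros)

definition clamp4 :: "real \<Rightarrow> real \<times> real \<times> real \<times> real \<Rightarrow> real \<times> real \<times> real \<times> real" where
  "clamp4 K u = (clamp K (fst u), clamp K (fst (snd u)), clamp K (fst (snd (snd u))), clamp K (snd (snd (snd u))))"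

lemma clamp4_simp: "clamp4 K (a, b, c, d) = (clamp K a, clamp K b, clamp K c, clamp K d)"
  by (simp add: clamp4_def)

lemma norm_clamp4_diff_le: "norm (clamp4 K u - clamp4 K v) \<le> norm (u - v)"
proof -
  have sq: "(clamp K y - clamp K z)\<^sup>2 \<le> (y - z)\<^sup>2" for y z
    using abs_clamp_diff_le[of K y z] by (simp add: abs_le_square_iff[symmetric])
  obtain a b c d where "u = (a, b, c, d)" by (metis prod.collapse)
  moreover obtain a' b' c' d' where "v = (a', b', c', d')" by (metis prod.collapse)
  ultimately show ?thesis
    using sq[of a a'] sq[of b b'] sq[of c c'] sq[of d d'] by (simp add: clamp4_simp norm_4tuple)
qed

lemma periodic_abs_le_SUP:
  fixes f :: "real \<Rightarrow> real"
  assumes "\<rho> > 0" "\<And>t. t \<ge> 0 \<Longrightarrow> f (t + \<rho>) = f t" "continuous_on {0..\<rho>} f" "t \<ge> 0"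
  shows "\<bar>f t\<bar> \<le> (SUP s\<in>{0..}. \<bar>f s\<bar>)"
proof -
  obtain M where "\<And>t. t \<ge> 0 \<Longrightarrow> \<bar>f t\<bar> \<le> M" using periodic_bounded[OF assms(1-3)] by blast
  then have "bdd_above ((\<lambda>s. \<bar>f s\<bar>) ` {0..})" by (intro bdd_aboveI2[of _ _ M]) simp
  then show ?thesis using assms(4) by (intro cSUP_upper) auto
qed

lemma abs_scaled_le: "0 \<le> (c::real) \<Longrightarrow> \<bar>x\<bar> \<le> B \<Longrightarrow> \<bar>c * x\<bar> \<le> c * B"
  by (simp add: abs_mult mult_left_mono)

lemma has_vector_derivative_4tuple_components:
  fixes x :: "real \<Rightarrow> real \<times> real \<times> real \<times> real"
  assumes "(x has_vector_derivative (v1, v2, v3, v4)) F"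
  shows "((\<lambda>s. fst (x s)) has_real_derivative v1) F"
    and "((\<lambda>s. fst (snd (x s))) has_real_derivative v2) F"
    and "((\<lambda>s. fst (snd (snd (x s)))) has_real_derivative v3) F"
    and "((\<lambda>s. snd (snd (snd (x s)))) has_real_derivative v4) F"
  using bounded_linear.has_vector_derivative[OF bounded_linear_fst assms]
    bounded_linear.has_vector_derivative[OF bounded_linear_fst
      bounded_linear.has_vector_derivative[OF bounded_linear_snd assms]]
    bounded_linear.has_vector_derivative[OF bounded_linear_fst
      bounded_linear.has_vector_derivative[OF bounded_linear_snd
        bounded_linear.has_vector_derivative[OF bounded_linear_snd assms]]]
    bounded_linear.has_vector_derivative[OF bounded_linear_snd
      bounded_linear.has_vector_derivative[OF bounded_linear_snd
        bounded_linear.has_vector_derivative[OF bounded_linear_snd assms]]]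
  by (simp_all add: has_real_derivative_iff_has_vector_derivative)

lemma abs_mult_diff_le:
  fixes p q p' q' :: real
  assumes "\<bar>p\<bar> \<le> K" "\<bar>q'\<bar> \<le> K"
  shows "\<bar>p * q - p' * q'\<bar> \<le> K * (\<bar>p - p'\<bar> + \<bar>q - q'\<bar>)"
proof -
  have "p * q - p' * q' = p * (q - q') + q' * (p - p')" by (simp add: algebra_simps)
  then have "\<bar>p * q - p' * q'\<bar> \<le> \<bar>p\<bar> * \<bar>q - q'\<bar> + \<bar>q'\<bar> * \<bar>p - p'\<bar>"
    by (simp add: abs_mult[symmetric] abs_triangle_ineq)
  also have "\<dots> \<le> K * \<bar>q - q'\<bar> + K * \<bar>p - p'\<bar>" using assms by (intro add_mono mult_right_mono) auto
  finally show ?thesis by (simp add: algebra_simps)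
qed

lemma logistic_term_lipschitz:
  fixes x y z x' y' z' \<alpha> \<beta> :: real
  assumes "\<bar>x\<bar> \<le> K" "\<bar>x'\<bar> \<le> K" "\<bar>y'\<bar> \<le> K" "\<bar>z'\<bar> \<le> K" "0 \<le> \<alpha>" "0 \<le> \<beta>"
    and "\<bar>x - x'\<bar> \<le> n" "\<bar>y - y'\<bar> \<le> n" "\<bar>z - z'\<bar> \<le> n"
  shows "\<bar>x * (1 - x - \<alpha> * y - \<beta> * z) - x' * (1 - x' - \<alpha> * y' - \<beta> * z')\<bar>
    \<le> (1 + 2 * K * (1 + \<alpha> + \<beta>)) * n"
proof -
  have K: "0 \<le> K" using assms(1) by linarith
  have prod: "\<bar>x * v - x' * v'\<bar> \<le> K * (2 * n)" if "\<bar>v'\<bar> \<le> K" "\<bar>v - v'\<bar> \<le> n" for v v'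
  proof -
    have "\<bar>x - x'\<bar> + \<bar>v - v'\<bar> \<le> 2 * n" using assms(7) that(2) by simp
    then have "K * (\<bar>x - x'\<bar> + \<bar>v - v'\<bar>) \<le> K * (2 * n)" using K by (rule mult_left_mono)
    then show ?thesis using abs_mult_diff_le[OF assms(1) that(1), of v x'] by linarith
  qed
  have "\<bar>\<alpha> * (x * y - x' * y')\<bar> \<le> \<alpha> * (K * (2 * n))" "\<bar>\<beta> * (x * z - x' * z')\<bar> \<le> \<beta> * (K * (2 * n))"
    using prod[OF assms(3,8)] prod[OF assms(4,9)] assms(5,6) by (simp_all add: abs_mult mult_left_mono)
  moreover have "x * (1 - x - \<alpha> * y - \<beta> * z) - x' * (1 - x' - \<alpha> * y' - \<beta> * z')
      = (x - x') - (x * x - x' * x') - \<alpha> * (x * y - x' * y') - \<beta> * (x * z - x' * z')"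
    by (simp add: algebra_simps)
  moreover have "(1 + 2 * K * (1 + \<alpha> + \<beta>)) * n = n + K * (2 * n) + \<alpha> * (K * (2 * n)) + \<beta> * (K * (2 * n))"
    by (simp add: algebra_simps)
  ultimately show ?thesis using prod[OF assms(2,7)] assms(7) unfolding abs_le_iff by linarith
qed

lemma solves_on_subset: "solves_on f x S \<Longrightarrow> T \<subseteq> S \<Longrightarrow> solves_on f x T"
  unfolding solves_on_def by (meson has_vector_derivative_within_subset subsetD)

section \<open>The vector field on the boundary of the envelopes\<close>

lemma crossing_u1:
  fixes x1 v z Q V Z a1 d1 \<mu> :: real
  assumes "\<bar>x1 - 1\<bar> = Q" "0 < Q" "Q \<le> 1/2" "\<bar>v\<bar> \<le> V" "\<bar>z\<bar> \<le> Z" "0 \<le> a1" "0 \<le> d1"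
    "\<mu> \<le> 1/4" "3 * (a1 * V + d1 * Z) < Q / 2"
  shows "(x1 - 1) * (x1 * (1 - x1 - a1 * v - d1 * z)) < Q * (- \<mu> * Q)"
proof -
  define e where "e = x1 - 1"
  define P where "P = a1 * v + d1 * z"
  define A where "A = a1 * V + d1 * Z"
  have e: "\<bar>e\<bar> = Q" "e * e = Q * Q" "1/2 \<le> 1 + e" "\<bar>1 + e\<bar> \<le> 3/2"
    using assms(1,3) abs_mult_self_eq[of e] unfolding e_def by auto
  have "\<bar>P\<bar> \<le> A"
    using assms(4-7) abs_triangle_ineq[of "a1 * v" "d1 * z"] abs_scaled_le[of a1 v V] abs_scaled_le[of d1 z Z]
    unfolding P_def A_def by linarith
  then have "\<bar>1 + e\<bar> * \<bar>e\<bar> * \<bar>P\<bar> \<le> (3/2) * Q * A" using e by (intro mult_mono) auto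
  then have T2: "\<bar>(1 + e) * e * P\<bar> \<le> (3/2) * (Q * A)" by (simp add: abs_mult)
  have T1: "(1/2) * (Q * Q) \<le> (1 + e) * (e * e)" unfolding e(2) using e(3) by (rule mult_right_mono) simp
  have T3: "\<mu> * (Q * Q) \<le> (1/4) * (Q * Q)" using assms(8) by (intro mult_right_mono) auto
  have "Q * (3 * A) < Q * (Q / 2)" using assms(2,9) unfolding A_def by simp
  then have QA: "(3/2) * (Q * A) < (1/4) * (Q * Q)" by (simp add: algebra_simps)
  have "(x1 - 1) * (x1 * (1 - x1 - a1 * v - d1 * z)) - Q * (- \<mu> * Q)
      = - ((1 + e) * (e * e)) - (1 + e) * e * P + \<mu> * (Q * Q)"
    unfolding e_def P_def by (simp add: algebra_simps)
  then show ?thesis using T1 T2 T3 QA unfolding abs_le_iff by linarith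
qed

lemma crossing_u3:
  fixes z v Q V b3 \<mu> :: real
  assumes "\<bar>z\<bar> = Q" "0 < Q" "\<bar>v\<bar> \<le> V" "0 < b3" "\<mu> \<le> b3 / 2" "2 * V < Q"
  shows "z * (b3 * (v - z)) < Q * (- \<mu> * Q)"
proof -
  have "\<bar>z\<bar> * \<bar>v\<bar> \<le> Q * V" using assms(1,3) by (intro mult_mono) auto
  then have "z * v \<le> Q * V" using abs_ge_self[of "z * v"] by (simp add: abs_mult)
  then have "b3 * (z * v) \<le> b3 * (Q * V)" using assms(4) by simp
  moreover have "b3 * (z * z) = b3 * (Q * Q)" using assms(1) abs_mult_self_eq[of z] by simp
  moreover have "\<mu> * (Q * Q) \<le> (1/2) * (b3 * (Q * Q))" using assms(5) mult_right_mono[of \<mu> "b3/2" "Q * Q"]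
    by simp
  moreover have "b3 * (Q * V) < (1/2) * (b3 * (Q * Q))" using assms(2,4,6) by simp
  moreover have "z * (b3 * (v - z)) - Q * (- \<mu> * Q) = b3 * (z * v) - b3 * (z * z) + \<mu> * (Q * Q)"
    by (simp add: algebra_simps)
  ultimately show ?thesis by linarith
qed

lemma crossing_u4:
  fixes x4 W v Q V Wm b4 d4 \<mu> I :: real
  assumes "\<bar>x4 - W\<bar> = Q" "0 < Q" "Q \<le> 1" "\<bar>W\<bar> \<le> Wm" "\<bar>v\<bar> \<le> V" "0 < b4" "0 < d4"
    "\<mu> \<le> b4 / 2" "2 * d4 * (Wm + 1) * V < Q"
  shows "(x4 - W) * (b4 * (I - x4 - d4 * x4 * v) - b4 * (I - W)) < Q * (- \<mu> * Q)"
proof -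
  define e where "e = x4 - W"
  define R where "R = b4 * d4 * (e * (x4 * v))"
  have "\<bar>x4\<bar> \<le> Wm + 1" using assms(1,3,4) by linarith
  then have "\<bar>x4\<bar> * \<bar>v\<bar> \<le> (Wm + 1) * V" using assms(5) by (intro mult_mono) auto
  then have "\<bar>e\<bar> * (\<bar>x4\<bar> * \<bar>v\<bar>) \<le> Q * ((Wm + 1) * V)"
    using assms(1,2) unfolding e_def by (rule_tac mult_mono) auto
  then have "\<bar>R\<bar> \<le> (b4 * d4) * (Q * ((Wm + 1) * V))"
    unfolding R_def using assms(6,7) by (simp add: abs_mult mult_left_mono)
  moreover have "b4 * (e * e) = b4 * (Q * Q)" using assms(1) abs_mult_self_eq[of e] unfolding e_def by simp
  moreover have "\<mu> * (Q * Q) \<le> (1/2) * (b4 * (Q * Q))" using assms(8) mult_right_mono[of \<mu> "b4/2" "Q * Q"]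
    by simp
  moreover have "(b4 * d4) * (Q * ((Wm + 1) * V)) < (1/2) * (b4 * (Q * Q))"
  proof -
    have "(b4 * Q) * (2 * d4 * (Wm + 1) * V) < (b4 * Q) * Q" using assms(2,6,9) by simp
    then show ?thesis by (simp add: algebra_simps)
  qed
  moreover have "(x4 - W) * (b4 * (I - x4 - d4 * x4 * v) - b4 * (I - W)) - Q * (- \<mu> * Q)
      = - (b4 * (e * e)) - R + \<mu> * (Q * Q)" unfolding e_def R_def by (simp add: algebra_simps)
  ultimately show ?thesis unfolding abs_le_iff by linarith
qed

lemma crossing_u2_decay:
  fixes v x1 x4 B W b2 a2 d2 c :: real
  assumes "\<bar>v\<bar> = B" "0 < B" "0 \<le> b2" "b2 * \<bar>v + a2 * (x1 - 1) + d2 * (x4 - W)\<bar> < c / 2"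
    "c = b2 * (a2 + d2 - 1)"
  shows "v * (b2 * v * (1 - v - a2 * x1 - d2 * x4)) < B * (B * (- (c / 2) + b2 * d2 * (1 - W)))"
proof -
  define D where "D = v + a2 * (x1 - 1) + d2 * (x4 - W)"
  have "b2 * (- \<bar>D\<bar>) \<le> b2 * D" using assms(3) by (intro mult_left_mono) auto
  then have "- (c / 2) - b2 * D < 0" using assms(4) unfolding D_def by simp
  moreover have vv: "v * v = B * B" using assms(1) abs_mult_self_eq[of v] by simp
  ultimately have "(v * v) * (- (c / 2) - b2 * D) < 0" using assms(2) by (intro mult_pos_neg) auto
  moreover have "v * (b2 * v * (1 - v - a2 * x1 - d2 * x4)) - (v * v) * (- (c / 2) + b2 * d2 * (1 - W))
      = (v * v) * (- (c / 2) - b2 * D)"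
    unfolding D_def assms(5) by (simp add: algebra_simps)
  ultimately show ?thesis using vv by (simp add: mult.assoc)
qed

lemma crossing_u2_growth:
  fixes v x1 x4 B W b2 a2 d2 c :: real
  assumes "v = B" "0 < B" "0 \<le> b2" "b2 * \<bar>v + a2 * (x1 - 1) + d2 * (x4 - W)\<bar> < c / 2"
    "c = b2 * (1 - a2 - d2)"
  shows "B * (c / 2 + b2 * d2 * (1 - W)) < b2 * v * (1 - v - a2 * x1 - d2 * x4)"
proof -
  define D where "D = v + a2 * (x1 - 1) + d2 * (x4 - W)"
  have "b2 * D \<le> b2 * \<bar>D\<bar>" using assms(3) by (intro mult_left_mono) auto
  then have "0 < c / 2 - b2 * D" using assms(4) unfolding D_def by simp
  then have "0 < B * (c / 2 - b2 * D)" using assms(2) by simp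
  moreover have "b2 * v * (1 - v - a2 * x1 - d2 * x4) - B * (c / 2 + b2 * d2 * (1 - W))
      = B * (c / 2 - b2 * D)"
    unfolding D_def assms(1,5) by (simp add: algebra_simps)
  ultimately show ?thesis by linarith
qed

section \<open>The forced system\<close>

locale forced_system =
  fixes a1 a2 b2 b3 b4 d1 d2 d4 \<rho> :: real and i w :: "real \<Rightarrow> real"
  assumes pos: "a1 > 0" "a2 > 0" "b2 > 0" "b3 > 0" "b4 > 0" "d1 > 0" "d2 > 0" "d4 > 0"
    and rho: "\<rho> > 0"
    and i_cont: "continuous_on {0..} i"
    and i_mean: "(1 / \<rho>) * integral {0..\<rho>} i = 1"
    and w_ode: "\<forall>t\<ge>0. (w has_real_derivative b4 * (i t - w t)) (at t within {0..})"
    and w_per: "\<forall>t\<ge>0. w (t + \<rho>) = w t"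
begin

abbreviation F :: "real \<Rightarrow> R4 \<Rightarrow> R4" where "F \<equiv> sysF a1 a2 b2 b3 b4 d1 d2 d4 i"

lemma F_simp: "F t (u1, u2, u3, u4) = (u1 * (1 - u1 - a1 * u2 - d1 * u3),
    b2 * u2 * (1 - u2 - a2 * u1 - d2 * u4), b3 * (u2 - u3), b4 * (i t - u4 - d4 * u4 * u2))"
  by (simp add: sysF_def)

definition per_sol :: "real \<Rightarrow> R4" where "per_sol t = (1, 0, 0, w t)"

lemma w_continuous: "continuous_on {0..} w"
  using w_ode by (meson DERIV_continuous atLeast_iff continuous_on_eq_continuous_within)

lemma w_has_derivative:
  assumes "0 \<le> a" "t \<in> {a..b}"
  shows "(w has_real_derivative b4 * (i t - w t)) (at t within {a..b})"
proof -
  have "(w has_real_derivative b4 * (i t - w t)) (at t within {0..})" using w_ode assms by auto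
  then show ?thesis by (rule DERIV_subset) (use assms in auto)
qed

lemma integral_w: "integral {0..\<rho>} w = \<rho>"
proof -
  have "((\<lambda>t. b4 * (i t - w t)) has_integral (w \<rho> - w 0)) {0..\<rho>}"
    using rho by (intro fundamental_theorem_of_calculus)
      (auto simp: has_real_derivative_iff_has_vector_derivative[symmetric] intro!: w_has_derivative)
  moreover have "w \<rho> = w 0" using w_per by (metis add_0 order_refl)
  ultimately have "((\<lambda>t. b4 * (i t - w t)) has_integral 0) {0..\<rho>}" by simp
  then have "((\<lambda>t. (1 / b4) * (b4 * (i t - w t))) has_integral (1 / b4) * 0) {0..\<rho>}"
    by (rule has_integral_mult_right)
  then have "integral {0..\<rho>} (\<lambda>t. i t - w t) = 0" using pos(5) by (simp add: integral_unique)
  moreover have "i integrable_on {0..\<rho>}" "w integrable_on {0..\<rho>}"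
    using continuous_on_subset[OF i_cont] continuous_on_subset[OF w_continuous]
    by (auto intro!: integrable_continuous_real)
  ultimately have "integral {0..\<rho>} w = integral {0..\<rho>} i" by (simp add: integral_diff)
  also have "\<dots> = \<rho>" using i_mean rho by (simp add: field_simps)
  finally show ?thesis .
qed

definition wmax :: real where "wmax = (SUP t\<in>{0..}. \<bar>w t\<bar>)"

lemma abs_w_le_wmax: "t \<ge> 0 \<Longrightarrow> \<bar>w t\<bar> \<le> wmax"
  unfolding wmax_def using rho w_per continuous_on_subset[OF w_continuous]
  by (intro periodic_abs_le_SUP) auto

text \<open>Since \<open>w\<close> has mean \<open>1\<close> over a period, the primitive of \<open>1 - w\<close> is periodic, hence bounded;
  it absorbs the oscillating part of the growth rate of \<open>u\<^sub>2\<close> along the periodic solution.\<close>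
definition wdev :: "real \<Rightarrow> real" where "wdev t = integral {0..t} (\<lambda>s. 1 - w s)"

lemma wdev_has_derivative:
  assumes "0 \<le> a" "t \<in> {a..b}"
  shows "(wdev has_real_derivative 1 - w t) (at t within {a..b})"
proof -
  have "(wdev has_real_derivative 1 - w t) (at t within {0..b})"
    unfolding wdev_def using assms
    by (intro integral_has_real_derivative continuous_intros continuous_on_subset[OF w_continuous]) auto
  then show ?thesis by (rule DERIV_subset) (use assms in auto)
qed

lemma wdev_periodic: "t \<ge> 0 \<Longrightarrow> wdev (t + \<rho>) = wdev t"
  unfolding wdev_def
proof (rule periodic_zero_mean_primitive[OF rho])
  show "continuous_on {0..} (\<lambda>s. 1 - w s)" by (intro continuous_intros w_continuous)
  have "integral {0..\<rho>} (\<lambda>s. 1 - w s) = integral {0..\<rho>} (\<lambda>s. 1) - integral {0..\<rho>} w"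
    using continuous_on_subset[OF w_continuous] by (intro integral_diff) (auto intro: integrable_continuous_real)
  then show "integral {0..\<rho>} (\<lambda>s. 1 - w s) = 0" using integral_w rho by simp
qed (use w_per in auto)

definition wdev_max :: real where "wdev_max = (SUP t\<in>{0..}. \<bar>wdev t\<bar>)"

lemma abs_wdev_le_wdev_max: "t \<ge> 0 \<Longrightarrow> \<bar>wdev t\<bar> \<le> wdev_max"
  unfolding wdev_max_def using rho wdev_periodic
  by (intro periodic_abs_le_SUP) (auto intro: DERIV_continuous_on[OF wdev_has_derivative])

lemma per_sol_solves: "solves_on F per_sol {0..}"
  unfolding solves_on_def
proof
  fix t :: real assume "t \<in> {0..}"
  then have "(w has_vector_derivative b4 * (i t - w t)) (at t within {0..})"
    using w_ode by (simp add: has_real_derivative_iff_has_vector_derivative)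
  then have "(per_sol has_vector_derivative (0, 0, 0, b4 * (i t - w t))) (at t within {0..})"
    unfolding per_sol_def by (intro has_vector_derivative_Pair has_vector_derivative_const)
  then show "(per_sol has_vector_derivative F t (per_sol t)) (at t within {0..})"
    by (simp add: per_sol_def F_simp)
qed

lemma continuous_on_per_sol: "continuous_on {0..} per_sol"
  unfolding per_sol_def using w_continuous by (intro continuous_intros)

lemma solves_on_F_components:
  fixes x :: "real \<Rightarrow> R4"
  assumes "solves_on F x S" "t \<in> S"
  defines "x1 \<equiv> \<lambda>s. fst (x s)" and "x2 \<equiv> \<lambda>s. fst (snd (x s))"
    and "x3 \<equiv> \<lambda>s. fst (snd (snd (x s)))" and "x4 \<equiv> \<lambda>s. snd (snd (snd (x s)))"
  shows "(x1 has_real_derivative x1 t * (1 - x1 t - a1 * x2 t - d1 * x3 t)) (at t within S)"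
    and "(x2 has_real_derivative b2 * x2 t * (1 - x2 t - a2 * x1 t - d2 * x4 t)) (at t within S)"
    and "(x3 has_real_derivative b3 * (x2 t - x3 t)) (at t within S)"
    and "(x4 has_real_derivative b4 * (i t - x4 t - d4 * x4 t * x2 t)) (at t within S)"
proof -
  have "x t = (x1 t, x2 t, x3 t, x4 t)" by (simp add: x1_def x2_def x3_def x4_def)
  moreover have "(x has_vector_derivative F t (x t)) (at t within S)"
    using assms(1,2) unfolding solves_on_def by blast
  ultimately have "(x has_vector_derivative (x1 t * (1 - x1 t - a1 * x2 t - d1 * x3 t),
      b2 * x2 t * (1 - x2 t - a2 * x1 t - d2 * x4 t), b3 * (x2 t - x3 t),
      b4 * (i t - x4 t - d4 * x4 t * x2 t))) (at t within S)"
    by (simp add: F_simp)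
  from has_vector_derivative_4tuple_components[OF this] show
    "(x1 has_real_derivative x1 t * (1 - x1 t - a1 * x2 t - d1 * x3 t)) (at t within S)"
    "(x2 has_real_derivative b2 * x2 t * (1 - x2 t - a2 * x1 t - d2 * x4 t)) (at t within S)"
    "(x3 has_real_derivative b3 * (x2 t - x3 t)) (at t within S)"
    "(x4 has_real_derivative b4 * (i t - x4 t - d4 * x4 t * x2 t)) (at t within S)"
    unfolding x1_def x2_def x3_def x4_def by simp_all
qed

lemma F_clamp4_lipschitz:
  assumes K: "0 \<le> K"
  obtains L where "0 \<le> L" "\<And>t u v. norm (F t (clamp4 K u) - F t (clamp4 K v)) \<le> L * norm (u - v)"
proof
  define L where "L = (1 + 2 * K * (1 + a1 + d1)) + b2 * (1 + 2 * K * (1 + a2 + d2)) + 2 * b3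
      + b4 * (1 + 2 * d4 * K)"
  show "0 \<le> L" unfolding L_def using K pos by (intro add_nonneg_nonneg mult_nonneg_nonneg) auto
  fix t u v
  obtain p1 p2 p3 p4 where p: "clamp4 K u = (p1, p2, p3, p4)" by (metis prod.collapse)
  obtain q1 q2 q3 q4 where q: "clamp4 K v = (q1, q2, q3, q4)" by (metis prod.collapse)
  have bp: "\<bar>p1\<bar> \<le> K" "\<bar>p2\<bar> \<le> K" "\<bar>p3\<bar> \<le> K" "\<bar>p4\<bar> \<le> K" "\<bar>q1\<bar> \<le> K" "\<bar>q2\<bar> \<le> K" "\<bar>q3\<bar> \<le> K" "\<bar>q4\<bar> \<le> K"
    using p q abs_clamp_le[OF K] unfolding clamp4_def by auto
  define n where "n = norm (clamp4 K u - clamp4 K v)"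
  have dn: "\<bar>p1 - q1\<bar> \<le> n" "\<bar>p2 - q2\<bar> \<le> n" "\<bar>p3 - q3\<bar> \<le> n" "\<bar>p4 - q4\<bar> \<le> n"
    unfolding n_def p q by (simp_all add: abs_le_norm_4tuple)
  have c1: "\<bar>p1 * (1 - p1 - a1 * p2 - d1 * p3) - q1 * (1 - q1 - a1 * q2 - d1 * q3)\<bar>
      \<le> (1 + 2 * K * (1 + a1 + d1)) * n"
    using pos by (intro logistic_term_lipschitz bp dn) auto
  have "\<bar>b2 * (p2 * (1 - p2 - a2 * p1 - d2 * p4) - q2 * (1 - q2 - a2 * q1 - d2 * q4))\<bar>
      \<le> b2 * ((1 + 2 * K * (1 + a2 + d2)) * n)"
    using pos by (intro abs_scaled_le logistic_term_lipschitz bp dn) auto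
  then have c2: "\<bar>b2 * p2 * (1 - p2 - a2 * p1 - d2 * p4) - b2 * q2 * (1 - q2 - a2 * q1 - d2 * q4)\<bar>
      \<le> b2 * ((1 + 2 * K * (1 + a2 + d2)) * n)"
    by (simp only: mult.assoc right_diff_distrib)
  have "\<bar>b3 * ((p2 - q2) - (p3 - q3))\<bar> \<le> b3 * (2 * n)"
    using pos(4) dn by (intro abs_scaled_le) auto
  then have c3: "\<bar>b3 * (p2 - p3) - b3 * (q2 - q3)\<bar> \<le> b3 * (2 * n)"
    by (simp only: right_diff_distrib diff_diff_eq2 diff_add_eq add_diff_eq) (simp add: algebra_simps)
  have "\<bar>p4 - q4\<bar> + \<bar>p2 - q2\<bar> \<le> 2 * n" using dn by linarith
  then have "\<bar>p4 * p2 - q4 * q2\<bar> \<le> K * (2 * n)"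
    using abs_mult_diff_le[OF bp(4,6), of p2 q4] mult_left_mono[OF _ K] by fastforce
  then have "\<bar>d4 * (p4 * p2 - q4 * q2)\<bar> \<le> d4 * (K * (2 * n))" using pos(8) by (intro abs_scaled_le) auto
  then have "\<bar>b4 * ((p4 - q4) + d4 * (p4 * p2 - q4 * q2))\<bar> \<le> b4 * (n + d4 * (K * (2 * n)))"
    using pos(5) dn(4) by (intro abs_scaled_le) (auto simp: abs_le_iff)
  moreover have "b4 * (i t - p4 - d4 * p4 * p2) - b4 * (i t - q4 - d4 * q4 * q2)
      = - (b4 * ((p4 - q4) + d4 * (p4 * p2 - q4 * q2)))" by (simp add: algebra_simps)
  ultimately have c4: "\<bar>b4 * (i t - p4 - d4 * p4 * p2) - b4 * (i t - q4 - d4 * q4 * q2)\<bar>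
      \<le> b4 * (n + d4 * (K * (2 * n)))" by simp
  have "L * n = (1 + 2 * K * (1 + a1 + d1)) * n + b2 * ((1 + 2 * K * (1 + a2 + d2)) * n) + b3 * (2 * n)
      + b4 * (n + d4 * (K * (2 * n)))" by (simp add: L_def algebra_simps)
  then have "norm (F t (clamp4 K u) - F t (clamp4 K v)) \<le> L * n"
    unfolding p q F_simp using c1 c2 c3 c4 norm_4tuple_le_sum_abs by simp (smt (verit))
  also have "\<dots> \<le> L * norm (u - v)"
    unfolding n_def using norm_clamp4_diff_le \<open>0 \<le> L\<close> by (rule mult_left_mono)
  finally show "norm (F t (clamp4 K u) - F t (clamp4 K v)) \<le> L * norm (u - v)" .
qed

lemma continuous_on_F_clamp4:
  assumes "0 \<le> a" "continuous_on {a..b} f"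
  shows "continuous_on {a..b} (\<lambda>s. F s (clamp4 K (f s)))"
proof -
  have "continuous_on {a..b} i" using continuous_on_subset[OF i_cont] assms(1) by auto
  then show ?thesis
    unfolding sysF_def clamp4_def case_prod_beta by (intro continuous_intros assms(2))
qed

text \<open>Outside a box containing the unit tube around \<open>per_sol\<close> the vector field is cut off, which
  makes it globally Lipschitz; solutions of the truncated system are solutions of the original
  one as long as they stay within distance \<open>1\<close> of \<open>per_sol\<close>.\<close>
abbreviation F_trunc :: "real \<Rightarrow> R4 \<Rightarrow> R4" where "F_trunc t u \<equiv> F t (clamp4 (wmax + 2) u)"

lemma truncated_solution_exists:
  assumes "0 \<le> t0"
  obtains X where "X t0 = x0" "solves_on F_trunc X {t0..}"
proof -
  have "0 \<le> wmax + 2" using abs_w_le_wmax[of 0] by linarith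
  then obtain L where "0 \<le> L" "\<And>t u v. norm (F_trunc t u - F_trunc t v) \<le> L * norm (u - v)"
    using F_clamp4_lipschitz by blast
  then obtain X where "X t0 = x0" "\<And>t. t0 \<le> t \<Longrightarrow> (X has_vector_derivative F_trunc t (X t)) (at t within {t0..})"
    using assms by (rule_tac global_solution_lipschitz[of L t0 F_trunc x0]) (auto intro: continuous_on_F_clamp4)
  then show ?thesis by (intro that[of X]) (auto simp: solves_on_def)
qed

lemma clamp4_near_per_sol:
  assumes "norm (u - per_sol t) \<le> 1" "t \<ge> 0"
  shows "clamp4 (wmax + 2) u = u"
proof -
  obtain u1 u2 u3 u4 where u: "u = (u1, u2, u3, u4)" by (metis prod.collapse)
  then have "norm (u1 - 1, u2, u3, u4 - w t) \<le> 1" using assms(1) by (simp add: per_sol_def)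
  then have "\<bar>u1 - 1\<bar> \<le> 1" "\<bar>u2\<bar> \<le> 1" "\<bar>u3\<bar> \<le> 1" "\<bar>u4 - w t\<bar> \<le> 1"
    by (rule order_trans[OF abs_le_norm_4tuple(1)] order_trans[OF abs_le_norm_4tuple(2)]
        order_trans[OF abs_le_norm_4tuple(3)] order_trans[OF abs_le_norm_4tuple(4)])+
  then show ?thesis using abs_w_le_wmax[OF assms(2)] unfolding u by (simp add: clamp4_simp clamp_eq_self)
qed

lemma truncated_solves_F:
  assumes X: "solves_on F_trunc X {t0..}" and "0 \<le> t0" "S \<subseteq> {t0..}"
    and near: "\<And>s. s \<in> S \<Longrightarrow> norm (X s - per_sol s) \<le> 1"
  shows "solves_on F X S"
  unfolding solves_on_def
proof
  fix s assume "s \<in> S"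
  then have "(X has_vector_derivative F_trunc s (X s)) (at s within S)"
    using X assms(3) unfolding solves_on_def by (blast intro: has_vector_derivative_within_subset)
  moreover have "clamp4 (wmax + 2) (X s) = X s"
    using near[OF \<open>s \<in> S\<close>] \<open>s \<in> S\<close> assms(2,3) by (intro clamp4_near_per_sol[of "X s" s]) auto
  ultimately show "(X has_vector_derivative F s (X s)) (at s within S)" by simp
qed

lemma truncated_solution_exit:
  assumes X: "solves_on F_trunc X {t0..}" and "0 \<le> t0" "r \<le> 1"
    and start: "norm (X t0 - per_sol t0) < r" and "t0 \<le> t1" "r \<le> norm (X t1 - per_sol t1)"
  obtains T where "t0 < T" "T \<le> t1" "norm (X T - per_sol T) = r" "solves_on F X {t0..T}"
proof -
  have "continuous_on {t0..} X"
    using X unfolding solves_on_def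
    by (meson continuous_on_eq_continuous_within has_vector_derivative_continuous)
  then have "continuous_on {t0..} (\<lambda>s. norm (X s - per_sol s))"
    using continuous_on_subset[OF continuous_on_per_sol] \<open>0 \<le> t0\<close> by (intro continuous_intros) auto
  then obtain T where T: "t0 < T" "T \<le> t1" "norm (X T - per_sol T) = r"
    and before: "\<And>s. s \<in> {t0..<T} \<Longrightarrow> norm (X s - per_sol s) < r"
    using first_crossing_time[OF _ start assms(5,6)] by blast
  have "norm (X s - per_sol s) \<le> 1" if "s \<in> {t0..T}" for s
    using before[of s] T(3) that \<open>r \<le> 1\<close> by (cases "s = T") auto
  then have "solves_on F X {t0..T}" using X \<open>0 \<le> t0\<close> by (rule_tac truncated_solves_F) auto
  with T show ?thesis by (rule that)
qed

lemma diff_per_sol: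
  "u - per_sol t = (fst u - 1, fst (snd u), fst (snd (snd u)), snd (snd (snd u)) - w t)"
  by (simp add: per_sol_def prod_eq_iff)

end

section \<open>Stability for \<open>a\<^sub>2 + d\<^sub>2 > 1\<close>\<close>

locale stable_regime = forced_system +
  assumes competitive: "a2 + d2 > 1"
begin

text \<open>Envelopes for the deviation from \<open>per_sol\<close>: \<open>u\<^sub>1 - 1\<close>, \<open>u\<^sub>3\<close> and \<open>u\<^sub>4 - w\<close> are kept below
  \<open>k\<^sub>j \<eta> e\<^sup>-\<^sup>\<mu>\<^sup>(\<^sup>t\<^sup>-\<^sup>t\<^sup>0\<^sup>)\<close>, and \<open>u\<^sub>2\<close> below \<open>u2_env\<close>, whose logarithmic derivative is the
  linearised growth rate of \<open>u\<^sub>2\<close> plus \<open>rate/2\<close>.\<close>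
definition rate :: real where "rate = b2 * (a2 + d2 - 1)"
definition gain :: real where "gain = exp (2 * b2 * d2 * wdev_max)"
definition mu :: real where "mu = min (min (rate / 2) (b3 / 2)) (min (1 / 4) (b4 / 2))"
definition k3 :: real where "k3 = 2 * gain + 1"
definition k1 :: real where "k1 = 6 * (a1 * gain + d1 * k3) + 1"
definition k4 :: real where "k4 = 2 * d4 * (wmax + 1) * gain + 1"
definition eta0 :: real where
  "eta0 = min (min (1 / (2 * k1)) (1 / k4)) (rate / (4 * b2 * (gain + a2 * k1 + d2 * k4)))"
definition u2_env :: "real \<Rightarrow> real \<Rightarrow> real \<Rightarrow> real" where
  "u2_env \<eta> t0 t = \<eta> * exp (- (rate / 2) * (t - t0) + b2 * d2 * (wdev t - wdev t0))"

lemma decay_constants: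
  shows "0 < rate" "1 \<le> gain" "0 < mu" "mu \<le> rate / 2" "mu \<le> b3 / 2" "mu \<le> 1 / 4" "mu \<le> b4 / 2"
    and "1 \<le> k1" "1 \<le> k3" "1 \<le> k4" "0 < eta0" "k1 * eta0 \<le> 1 / 2" "k4 * eta0 \<le> 1"
    and "b2 * (eta0 * (gain + a2 * k1 + d2 * k4)) \<le> rate / 4"
proof -
  have wmax: "0 \<le> wmax" and wdev_max: "0 \<le> wdev_max"
    using abs_w_le_wmax[of 0] abs_wdev_le_wdev_max[of 0] by auto
  show "0 < rate" "1 \<le> gain" unfolding rate_def gain_def using competitive pos wdev_max by auto
  then show "0 < mu" "mu \<le> rate / 2" "mu \<le> b3 / 2" "mu \<le> 1 / 4" "mu \<le> b4 / 2"
    unfolding mu_def using pos by auto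
  show "1 \<le> k3" "1 \<le> k1" "1 \<le> k4" unfolding k1_def k3_def k4_def using \<open>1 \<le> gain\<close> pos wmax by auto
  define S where "S = gain + a2 * k1 + d2 * k4"
  moreover have "0 < S" unfolding S_def using \<open>1 \<le> gain\<close> \<open>1 \<le> k1\<close> \<open>1 \<le> k4\<close> pos
    by (simp add: add_pos_nonneg)
  ultimately show "0 < eta0" unfolding eta0_def using \<open>0 < rate\<close> \<open>1 \<le> k1\<close> \<open>1 \<le> k4\<close> pos by auto
  have "eta0 \<le> 1 / (2 * k1)" "eta0 \<le> 1 / k4" and le: "eta0 \<le> rate / (4 * b2 * S)"
    unfolding eta0_def S_def by auto
  then show "k1 * eta0 \<le> 1 / 2" "k4 * eta0 \<le> 1"
    using \<open>1 \<le> k1\<close> \<open>1 \<le> k4\<close> by (auto simp: field_simps)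
  have "0 < 4 * b2 * S" using \<open>0 < S\<close> pos by simp
  with le have "eta0 * (4 * b2 * S) \<le> rate" by (simp add: pos_le_divide_eq)
  then show "b2 * (eta0 * (gain + a2 * k1 + d2 * k4)) \<le> rate / 4" unfolding S_def by (simp add: algebra_simps)
qed

lemma u2_env_pos: "0 < \<eta> \<Longrightarrow> 0 < u2_env \<eta> t0 t"
  by (simp add: u2_env_def)

lemma u2_env_le:
  assumes "0 \<le> \<eta>" "0 \<le> t0" "t0 \<le> t"
  shows "u2_env \<eta> t0 t \<le> gain * \<eta> * exp (- mu * (t - t0))"
proof -
  have "- (rate / 2) * (t - t0) \<le> - mu * (t - t0)"
    using decay_constants(4) assms by (intro mult_right_mono) auto
  moreover have "wdev t - wdev t0 \<le> 2 * wdev_max"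
    using abs_wdev_le_wdev_max[of t] abs_wdev_le_wdev_max[of t0] assms by linarith
  then have "b2 * d2 * (wdev t - wdev t0) \<le> 2 * b2 * d2 * wdev_max" using pos by simp
  ultimately have "exp (- (rate / 2) * (t - t0) + b2 * d2 * (wdev t - wdev t0))
      \<le> exp (2 * b2 * d2 * wdev_max) * exp (- mu * (t - t0))"
    by (simp flip: exp_add)
  then have "\<eta> * exp (- (rate / 2) * (t - t0) + b2 * d2 * (wdev t - wdev t0))
      \<le> \<eta> * (exp (2 * b2 * d2 * wdev_max) * exp (- mu * (t - t0)))"
    using assms(1) by (rule mult_left_mono)
  then show ?thesis unfolding u2_env_def gain_def by (simp add: mult_ac)
qed

lemma u2_env_has_derivative:
  assumes "0 \<le> t0" "s \<in> {t0..T}"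
  shows "(u2_env \<eta> t0 has_real_derivative u2_env \<eta> t0 s * (- (rate / 2) + b2 * d2 * (1 - w s)))
    (at s within {t0..T})"
  unfolding u2_env_def
  by (auto intro!: derivative_eq_intros wdev_has_derivative[OF assms])

context
  fixes \<eta> E x1 x2 x3 x4 W :: real
  assumes eta: "0 < \<eta>" "\<eta> \<le> eta0" and E: "0 < E" "E \<le> 1" and W: "\<bar>W\<bar> \<le> wmax"
    and bound1: "\<bar>x1 - 1\<bar> \<le> k1 * \<eta> * E" and bound2: "\<bar>x2\<bar> \<le> gain * \<eta> * E"
    and bound3: "\<bar>x3\<bar> \<le> k3 * \<eta> * E" and bound4: "\<bar>x4 - W\<bar> \<le> k4 * \<eta> * E"
begin

lemma scaled_le_scaled_eta0:
  assumes "0 \<le> k"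
  shows "k * \<eta> * E \<le> k * eta0"
proof -
  have "\<eta> * E \<le> \<eta>" using eta E by (intro mult_left_le) auto
  then have "\<eta> * E \<le> eta0" using eta by linarith
  then show ?thesis using assms by (simp add: mult_left_mono mult.assoc)
qed

lemma decay_inward_u1:
  assumes "\<bar>x1 - 1\<bar> = k1 * \<eta> * E"
  shows "(x1 - 1) * (x1 * (1 - x1 - a1 * x2 - d1 * x3)) < k1 * \<eta> * E * (- mu * (k1 * \<eta> * E))"
proof (rule crossing_u1[OF assms _ _ bound2 bound3])
  show "0 < k1 * \<eta> * E" using decay_constants(8) eta E by simp
  show "k1 * \<eta> * E \<le> 1 / 2"
    using scaled_le_scaled_eta0[of k1] decay_constants(8,12) by linarith
  have "3 * (a1 * gain + d1 * k3) * (\<eta> * E) < (k1 / 2) * (\<eta> * E)"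
    using eta E unfolding k1_def by (intro mult_strict_right_mono) auto
  then show "3 * (a1 * (gain * \<eta> * E) + d1 * (k3 * \<eta> * E)) < k1 * \<eta> * E / 2"
    by (simp add: algebra_simps)
qed (use pos decay_constants(6) in auto)

lemma decay_inward_u2:
  assumes "\<bar>x2\<bar> = B" "0 < B"
  shows "x2 * (b2 * x2 * (1 - x2 - a2 * x1 - d2 * x4)) < B * (B * (- (rate / 2) + b2 * d2 * (1 - W)))"
proof (rule crossing_u2_decay[OF assms])
  have "\<bar>x2 + a2 * (x1 - 1) + d2 * (x4 - W)\<bar> \<le> gain * eta0 + a2 * (k1 * eta0) + d2 * (k4 * eta0)"
    using bound1 bound2 bound4 scaled_le_scaled_eta0[of gain] scaled_le_scaled_eta0[of k1]
      scaled_le_scaled_eta0[of k4] decay_constants(2,8,10) abs_scaled_le[of a2] abs_scaled_le[of d2] pos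
      abs_triangle_ineq[of x2 "a2 * (x1 - 1)"] abs_triangle_ineq[of "x2 + a2 * (x1 - 1)" "d2 * (x4 - W)"]
    by (smt (verit) mult_left_mono)
  also have "\<dots> = eta0 * (gain + a2 * k1 + d2 * k4)" by (simp add: algebra_simps)
  finally have "b2 * \<bar>x2 + a2 * (x1 - 1) + d2 * (x4 - W)\<bar> \<le> b2 * (eta0 * (gain + a2 * k1 + d2 * k4))"
    using pos(3) by (simp add: mult_left_mono)
  then show "b2 * \<bar>x2 + a2 * (x1 - 1) + d2 * (x4 - W)\<bar> < rate / 2"
    using decay_constants(1,14) by linarith
qed (use pos rate_def in auto)

lemma decay_inward_u3:
  assumes "\<bar>x3\<bar> = k3 * \<eta> * E"
  shows "x3 * (b3 * (x2 - x3)) < k3 * \<eta> * E * (- mu * (k3 * \<eta> * E))"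
proof (rule crossing_u3[OF assms _ bound2])
  show "0 < k3 * \<eta> * E" using decay_constants(9) eta E by simp
  have "(2 * gain) * (\<eta> * E) < k3 * (\<eta> * E)"
    using eta E unfolding k3_def by (intro mult_strict_right_mono) auto
  then show "2 * (gain * \<eta> * E) < k3 * \<eta> * E" by (simp add: algebra_simps)
qed (use pos decay_constants(5) in auto)

lemma decay_inward_u4:
  assumes "\<bar>x4 - W\<bar> = k4 * \<eta> * E"
  shows "(x4 - W) * (b4 * (I - x4 - d4 * x4 * x2) - b4 * (I - W)) < k4 * \<eta> * E * (- mu * (k4 * \<eta> * E))"
proof (rule crossing_u4[OF assms _ _ W bound2])
  show "0 < k4 * \<eta> * E" using decay_constants(10) eta E by simp
  show "k4 * \<eta> * E \<le> 1" using scaled_le_scaled_eta0[of k4] decay_constants(10,13) by linarith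
  have "(2 * d4 * (wmax + 1) * gain) * (\<eta> * E) < k4 * (\<eta> * E)"
    using eta E unfolding k4_def by (intro mult_strict_right_mono) auto
  then show "2 * d4 * (wmax + 1) * (gain * \<eta> * E) < k4 * \<eta> * E" by (simp add: algebra_simps)
qed (use pos decay_constants(7) in auto)

end



lemma decay_envelopes:
  fixes x :: "real \<Rightarrow> R4"
  assumes eta: "0 < \<eta>" "\<eta> \<le> eta0" and "0 \<le> t0" and sol: "solves_on F x {t0..T}"
    and init: "norm (x t0 - per_sol t0) < \<eta>"
  defines "x1 \<equiv> \<lambda>s. fst (x s)" and "x2 \<equiv> \<lambda>s. fst (snd (x s))"
    and "x3 \<equiv> \<lambda>s. fst (snd (snd (x s)))" and "x4 \<equiv> \<lambda>s. snd (snd (snd (x s)))"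
    and "E \<equiv> \<lambda>s. exp (- mu * (s - t0))"
  shows "\<forall>s\<in>{t0..T}. \<bar>x1 s - 1\<bar> < k1 * \<eta> * E s \<and> \<bar>x2 s\<bar> < u2_env \<eta> t0 s
    \<and> \<bar>x3 s\<bar> < k3 * \<eta> * E s \<and> \<bar>x4 s - w s\<bar> < k4 * \<eta> * E s"
proof (cases "t0 \<le> T")
  case True
  define y where "y j = [\<lambda>s. x1 s - 1, x2, x3, \<lambda>s. x4 s - w s] ! j" for j
  define y' where "y' j s = [x1 s * (1 - x1 s - a1 * x2 s - d1 * x3 s),
    b2 * x2 s * (1 - x2 s - a2 * x1 s - d2 * x4 s), b3 * (x2 s - x3 s),
    b4 * (i s - x4 s - d4 * x4 s * x2 s) - b4 * (i s - w s)] ! j" for j s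
  define B where "B j = [\<lambda>s. k1 * \<eta> * E s, u2_env \<eta> t0, \<lambda>s. k3 * \<eta> * E s, \<lambda>s. k4 * \<eta> * E s] ! j" for j
  define B' where "B' j s = [- mu * (k1 * \<eta> * E s), u2_env \<eta> t0 s * (- (rate / 2) + b2 * d2 * (1 - w s)),
    - mu * (k3 * \<eta> * E s), - mu * (k4 * \<eta> * E s)] ! j" for j s
  have cases4: "j = 0 \<or> j = 1 \<or> j = 2 \<or> j = 3" if "j \<in> {..<4::nat}" for j using that by auto
  have E: "0 < E s" "s \<in> {t0..T} \<Longrightarrow> E s \<le> 1" for s
    unfolding E_def using decay_constants(3) by auto
  have "\<forall>j\<in>{..<4}. \<forall>s\<in>{t0..T}. \<bar>y j s\<bar> < B j s"
  proof (rule abs_barrier)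
    fix j s assume j: "j \<in> {..<4::nat}" and s: "s \<in> {t0..T}"
    have dx: "(x1 has_real_derivative x1 s * (1 - x1 s - a1 * x2 s - d1 * x3 s)) (at s within {t0..T})"
      "(x2 has_real_derivative b2 * x2 s * (1 - x2 s - a2 * x1 s - d2 * x4 s)) (at s within {t0..T})"
      "(x3 has_real_derivative b3 * (x2 s - x3 s)) (at s within {t0..T})"
      "(x4 has_real_derivative b4 * (i s - x4 s - d4 * x4 s * x2 s)) (at s within {t0..T})"
      using solves_on_F_components[OF sol s] unfolding x1_def x2_def x3_def x4_def by simp_all
    have dE: "((\<lambda>s. k * \<eta> * E s) has_real_derivative - mu * (k * \<eta> * E s)) (at s within {t0..T})" for k
      unfolding E_def by (auto intro!: derivative_eq_intros)
    show "(y j has_real_derivative y' j s) (at s within {t0..T})"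
      using cases4[OF j] dx w_has_derivative[OF \<open>0 \<le> t0\<close> s]
      by (elim disjE) (auto simp: y_def y'_def intro!: derivative_eq_intros)
    show "(B j has_real_derivative B' j s) (at s within {t0..T})"
      using cases4[OF j] dE u2_env_has_derivative[OF \<open>0 \<le> t0\<close> s]
      by (elim disjE) (auto simp: B_def B'_def)
    show "0 < B j s"
      using cases4[OF j] E(1)[of s] eta u2_env_pos decay_constants(8-10)
      by (elim disjE) (auto simp: B_def)
  next
    fix j assume j: "j \<in> {..<4::nat}"
    have "norm (x1 t0 - 1, x2 t0, x3 t0, x4 t0 - w t0) < \<eta>"
      using init by (simp add: x1_def x2_def x3_def x4_def diff_per_sol)
    then have "\<bar>x1 t0 - 1\<bar> < \<eta>" "\<bar>x2 t0\<bar> < \<eta>" "\<bar>x3 t0\<bar> < \<eta>" "\<bar>x4 t0 - w t0\<bar> < \<eta>"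
      by (meson abs_le_norm_4tuple le_less_trans)+
    moreover have "\<eta> \<le> k * \<eta>" if "1 \<le> k" for k using that eta by simp
    ultimately show "\<bar>y j t0\<bar> < B j t0"
      using cases4[OF j] decay_constants(8-10)
      by (elim disjE) (auto simp: y_def B_def E_def u2_env_def intro: less_le_trans)
  next
    fix j s assume j: "j \<in> {..<4::nat}" and s: "s \<in> {t0..T}"
      and all: "\<forall>k\<in>{..<4}. \<bar>y k s\<bar> \<le> B k s" and touch: "\<bar>y j s\<bar> = B j s"
    have bounds: "\<bar>x1 s - 1\<bar> \<le> k1 * \<eta> * E s" "\<bar>x2 s\<bar> \<le> u2_env \<eta> t0 s"
      "\<bar>x3 s\<bar> \<le> k3 * \<eta> * E s" "\<bar>x4 s - w s\<bar> \<le> k4 * \<eta> * E s"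
      using all[rule_format, of 0] all[rule_format, of 1] all[rule_format, of 2] all[rule_format, of 3]
      by (simp_all add: y_def B_def)
    have x2_gain: "\<bar>x2 s\<bar> \<le> gain * \<eta> * E s"
      using bounds(2) u2_env_le[of \<eta> t0 s] eta \<open>0 \<le> t0\<close> s unfolding E_def by auto
    note inward = decay_inward_u1 decay_inward_u2 decay_inward_u3 decay_inward_u4
    have "\<bar>w s\<bar> \<le> wmax" using s \<open>0 \<le> t0\<close> by (intro abs_w_le_wmax) auto
    note inward = inward[OF eta E(1)[of s] E(2)[OF s] this bounds(1) x2_gain bounds(3,4)]
    show "y j s * y' j s < B j s * B' j s"
      using cases4[OF j] touch inward(1-3) inward(4)[of "i s"] u2_env_pos[OF eta(1)] s \<open>0 \<le> t0\<close>
      by (elim disjE) (auto simp: y_def y'_def B_def B'_def)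
  qed (use True in auto)
  note env = this[rule_format]
  show ?thesis
  proof
    fix s assume "s \<in> {t0..T}"
    then show "\<bar>x1 s - 1\<bar> < k1 * \<eta> * E s \<and> \<bar>x2 s\<bar> < u2_env \<eta> t0 s
      \<and> \<bar>x3 s\<bar> < k3 * \<eta> * E s \<and> \<bar>x4 s - w s\<bar> < k4 * \<eta> * E s"
      using env[of 0 s] env[of 1 s] env[of 2 s] env[of 3 s] by (simp add: y_def B_def)
  qed
qed simp

definition amp :: real where "amp = k1 + gain + k3 + k4"

lemma decay_estimate:
  assumes "0 < \<eta>" "\<eta> \<le> eta0" "0 \<le> t0" "solves_on F x {t0..T}" "norm (x t0 - per_sol t0) < \<eta>"
    and "t \<in> {t0..T}"
  shows "norm (x t - per_sol t) \<le> amp * \<eta> * exp (- mu * (t - t0))"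
proof -
  define E where "E = exp (- mu * (t - t0))"
  have "\<bar>fst (x t) - 1\<bar> < k1 * \<eta> * E" "\<bar>fst (snd (x t))\<bar> < u2_env \<eta> t0 t"
    "\<bar>fst (snd (snd (x t)))\<bar> < k3 * \<eta> * E" "\<bar>snd (snd (snd (x t))) - w t\<bar> < k4 * \<eta> * E"
    using decay_envelopes[OF assms(1-5)] assms(6) unfolding E_def by auto
  moreover have "u2_env \<eta> t0 t \<le> gain * \<eta> * E" unfolding E_def using assms u2_env_le by auto
  ultimately have "\<bar>fst (x t) - 1\<bar> + \<bar>fst (snd (x t))\<bar> + \<bar>fst (snd (snd (x t)))\<bar>
      + \<bar>snd (snd (snd (x t))) - w t\<bar> \<le> amp * \<eta> * E"
    unfolding amp_def by (simp add: algebra_simps)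
  then show ?thesis unfolding E_def diff_per_sol using norm_4tuple_le_sum_abs order_trans by blast
qed

lemma amp_ge: "4 \<le> amp" using decay_constants(2,8-10) unfolding amp_def by linarith

definition eta1 :: real where "eta1 = min eta0 (1 / (2 * amp))"

lemma eta1: "0 < eta1" "eta1 \<le> eta0" "amp * eta1 \<le> 1 / 2" "eta1 < 1"
proof -
  show "0 < eta1" "eta1 \<le> eta0" "amp * eta1 \<le> 1 / 2"
    using decay_constants(11) amp_ge unfolding eta1_def by (auto simp: field_simps min_def)
  have "eta1 \<le> 1 / (2 * amp)" unfolding eta1_def by simp
  also have "\<dots> < 1" using amp_ge by simp
  finally show "eta1 < 1" .
qed

lemma decay_bound:
  assumes "0 < \<eta>" "\<eta> \<le> eta1" "0 \<le> t0" "solves_on F x {t0..T}" "norm (x t0 - per_sol t0) < \<eta>"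
    and "t \<in> {t0..T}"
  shows "norm (x t - per_sol t) \<le> amp * \<eta>"
proof -
  have "exp (- mu * (t - t0)) \<le> 1" using assms(6) decay_constants(3) by simp
  then have "amp * \<eta> * exp (- mu * (t - t0)) \<le> amp * \<eta>"
    using amp_ge assms(1) by (intro mult_left_le) auto
  then show ?thesis using decay_estimate[OF assms(1) _ assms(3-6)] assms(2) eta1(2) by force
qed

lemma solution_exists_near_per_sol:
  assumes "0 \<le> t0" "norm (x0 - per_sol t0) < \<eta>" "0 < \<eta>" "\<eta> \<le> eta1"
  shows "\<exists>x. x t0 = x0 \<and> solves_on F x {t0..}"
proof -
  obtain X where X0: "X t0 = x0" and X: "solves_on F_trunc X {t0..}"
    using truncated_solution_exists[OF assms(1)] by blast
  have near: "norm (X t - per_sol t) < 1" if t: "t0 \<le> t" for t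
  proof (rule ccontr)
    assume "\<not> norm (X t - per_sol t) < 1"
    then have "1 \<le> norm (X t - per_sol t)" by simp
    moreover have "norm (X t0 - per_sol t0) < 1" using X0 assms eta1(4) by simp
    ultimately obtain T where "t0 < T" "T \<le> t" "norm (X T - per_sol T) = 1" "solves_on F X {t0..T}"
      using truncated_solution_exit[OF X assms(1) order_refl _ t] by blast
    moreover have "norm (X T - per_sol T) \<le> amp * \<eta>"
      using calculation X0 assms by (intro decay_bound[of \<eta> t0 X T]) auto
    moreover have "amp * \<eta> \<le> 1 / 2"
      using eta1(3) assms(4) amp_ge by (smt (verit) mult_left_mono)
    ultimately show False by linarith
  qed
  have "solves_on F X {t0..}"
    by (rule truncated_solves_F[OF X assms(1) order_refl]) (use near in \<open>auto intro: less_imp_le\<close>)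
  with X0 show ?thesis by blast
qed

lemma unif_stable_per_sol: "unif_stable F per_sol"
  unfolding unif_stable_def
proof (intro allI impI)
  fix \<epsilon> :: real assume "0 < \<epsilon>"
  define \<delta> where "\<delta> = min eta1 (\<epsilon> / (2 * amp))"
  have \<delta>: "0 < \<delta>" "\<delta> \<le> eta1" "amp * \<delta> < \<epsilon>"
    using eta1(1) amp_ge \<open>0 < \<epsilon>\<close> by (auto simp: \<delta>_def min_def field_simps)
  show "\<exists>\<delta>>0. \<forall>t0\<ge>0. (\<forall>x0. norm (x0 - per_sol t0) < \<delta> \<longrightarrow> (\<exists>x. x t0 = x0 \<and> solves_on F x {t0..})) \<and>
      (\<forall>x T. solves_on F x {t0..T} \<and> norm (x t0 - per_sol t0) < \<delta> \<longrightarrow>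
        (\<forall>t\<in>{t0..T}. norm (x t - per_sol t) < \<epsilon>))"
  proof (intro exI[of _ \<delta>] conjI allI impI ballI)
    fix t0 :: real assume "0 \<le> t0"
    show "\<exists>x. x t0 = x0 \<and> solves_on F x {t0..}" if "norm (x0 - per_sol t0) < \<delta>" for x0
      by (rule solution_exists_near_per_sol[OF \<open>0 \<le> t0\<close> that \<delta>(1,2)])
    show "norm (x t - per_sol t) < \<epsilon>"
      if "solves_on F x {t0..T} \<and> norm (x t0 - per_sol t0) < \<delta>" "t \<in> {t0..T}" for x T t
    proof -
      have "norm (x t - per_sol t) \<le> amp * \<delta>"
        using that by (intro decay_bound[OF \<delta>(1,2) \<open>0 \<le> t0\<close>]) auto
      then show ?thesis using \<delta>(3) by linarith
    qed
  qed (use \<delta> in simp)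
qed

lemma unif_attractive_per_sol:
  "\<exists>\<delta>0>0. \<forall>\<epsilon>>0. \<exists>T>0. \<forall>t0\<ge>0. \<forall>x. solves_on F x {t0..} \<and> norm (x t0 - per_sol t0) < \<delta>0 \<longrightarrow>
    (\<forall>t\<ge>t0 + T. norm (x t - per_sol t) < \<epsilon>)"
proof (rule exI[of _ eta1], intro conjI allI impI)
  fix \<epsilon> :: real assume "0 < \<epsilon>"
  define T where "T = (\<bar>ln (\<epsilon> / (amp * eta1))\<bar> + 1) / mu"
  have "0 < T" unfolding T_def using decay_constants(3) by simp
  moreover have "norm (x t - per_sol t) < \<epsilon>"
    if "0 \<le> t0" "solves_on F x {t0..} \<and> norm (x t0 - per_sol t0) < eta1" "t0 + T \<le> t" for t0 x t
  proof -
    have "solves_on F x {t0..t}" using that(2) by (rule_tac solves_on_subset) auto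
    then have "norm (x t - per_sol t) \<le> amp * eta1 * exp (- mu * (t - t0))"
      by (rule decay_estimate[OF eta1(1,2) that(1)]) (use that \<open>0 < T\<close> in auto)
    also have "exp (- mu * (t - t0)) < \<epsilon> / (amp * eta1)"
    proof -
      have "- mu * (t - t0) \<le> - mu * T" using that(3) decay_constants(3) by simp
      also have "\<dots> < ln (\<epsilon> / (amp * eta1))" unfolding T_def using decay_constants(3) by simp
      finally have "exp (- mu * (t - t0)) < exp (ln (\<epsilon> / (amp * eta1)))" by (rule exp_less_mono)
      then show ?thesis using \<open>0 < \<epsilon>\<close> eta1(1) amp_ge by simp
    qed
    then have "amp * eta1 * exp (- mu * (t - t0)) < amp * eta1 * (\<epsilon> / (amp * eta1))"
      using eta1(1) amp_ge by (intro mult_strict_left_mono) auto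
    finally show ?thesis using eta1(1) amp_ge by simp
  qed
  ultimately show "\<exists>T>0. \<forall>t0\<ge>0. \<forall>x. solves_on F x {t0..} \<and> norm (x t0 - per_sol t0) < eta1 \<longrightarrow>
      (\<forall>t\<ge>t0 + T. norm (x t - per_sol t) < \<epsilon>)" by blast
qed (use eta1 in simp)

lemma unif_asym_stable_per_sol: "unif_asym_stable F per_sol"
  unfolding unif_asym_stable_def using unif_stable_per_sol unif_attractive_per_sol by blast

end

section \<open>Instability for \<open>a\<^sub>2 + d\<^sub>2 < 1\<close>\<close>

locale unstable_regime = forced_system +
  assumes invasive: "a2 + d2 < 1"
begin

definition rate :: real where "rate = b2 * (1 - a2 - d2)"
definition eps :: real where "eps = min 1 (rate / (4 * b2 * (1 + a2 + d2)))"
definition lower_gain :: real where "lower_gain = exp (- 2 * b2 * d2 * wdev_max) / 2"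

lemma growth_constants: "0 < rate" "0 < eps" "eps \<le> 1" "b2 * (eps + a2 * eps + d2 * eps) < rate / 2"
  "0 < lower_gain"
proof -
  show "0 < rate" "0 < lower_gain" unfolding rate_def lower_gain_def using invasive pos by auto
  then show "0 < eps" "eps \<le> 1" unfolding eps_def using pos by auto
  have "0 < 4 * b2 * (1 + a2 + d2)" using pos by simp
  moreover have "eps \<le> rate / (4 * b2 * (1 + a2 + d2))" unfolding eps_def by simp
  ultimately have "eps * (4 * b2 * (1 + a2 + d2)) \<le> rate" by (simp add: pos_le_divide_eq)
  then show "b2 * (eps + a2 * eps + d2 * eps) < rate / 2" using \<open>0 < rate\<close> by (simp add: algebra_simps)
qed

lemma growth_estimate:
  assumes sol: "solves_on F x {0..T}" and start: "0 < fst (snd (x 0))"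
    and near: "\<And>s. s \<in> {0..T} \<Longrightarrow> norm (x s - per_sol s) \<le> eps" and "t \<in> {0..T}"
  shows "fst (snd (x 0)) * lower_gain * exp (rate / 2 * t) \<le> fst (snd (x t))"
proof -
  define x2 where "x2 s = fst (snd (x s))" for s
  define B where "B s = (x2 0 / 2) * exp (rate / 2 * s + b2 * d2 * (wdev s - wdev 0))" for s
  have "\<forall>j\<in>{()}. \<forall>s\<in>{0..T}. (\<lambda>_ s. B s - x2 s) j s < 0"
  proof (rule barrier)
    fix s assume s: "s \<in> {0..T}"
    show "((\<lambda>s. B s - x2 s) has_real_derivative
        B s * (rate / 2 + b2 * d2 * (1 - w s)) - b2 * x2 s * (1 - x2 s - a2 * fst (x s) - d2 * snd (snd (snd (x s)))))
        (at s within {0..T})"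
      using solves_on_F_components(2)[OF sol s] wdev_has_derivative[OF order_refl s]
      unfolding B_def x2_def by (auto intro!: derivative_eq_intros)
    assume "B s - x2 s = 0"
    moreover have "norm (fst (x s) - 1, x2 s, fst (snd (snd (x s))), snd (snd (snd (x s))) - w s) \<le> eps"
      using near[OF s] unfolding diff_per_sol x2_def .
    then have "\<bar>fst (x s) - 1\<bar> \<le> eps" "\<bar>x2 s\<bar> \<le> eps" "\<bar>snd (snd (snd (x s))) - w s\<bar> \<le> eps"
      by (meson abs_le_norm_4tuple order_trans)+
    then have "\<bar>a2 * (fst (x s) - 1)\<bar> \<le> a2 * eps" "\<bar>d2 * (snd (snd (snd (x s))) - w s)\<bar> \<le> d2 * eps"
      and "\<bar>x2 s\<bar> \<le> eps" using pos by (simp_all add: abs_scaled_le)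
    then have "\<bar>x2 s + a2 * (fst (x s) - 1) + d2 * (snd (snd (snd (x s))) - w s)\<bar> \<le> eps + a2 * eps + d2 * eps"
      by (smt (verit, best) abs_triangle_ineq)
    then have "b2 * \<bar>x2 s + a2 * (fst (x s) - 1) + d2 * (snd (snd (snd (x s))) - w s)\<bar> < rate / 2"
      using growth_constants(4) pos(3) mult_left_mono[of _ _ b2] by (smt (verit))
    moreover have "0 < B s" using start unfolding B_def x2_def by simp
    ultimately show "B s * (rate / 2 + b2 * d2 * (1 - w s))
        - b2 * x2 s * (1 - x2 s - a2 * fst (x s) - d2 * snd (snd (snd (x s)))) < 0"
      using crossing_u2_growth[of "x2 s" "B s" b2 a2 "fst (x s)" d2 "snd (snd (snd (x s)))" "w s" rate]
        pos(3) rate_def by simp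
  qed (use start \<open>t \<in> {0..T}\<close> in \<open>auto simp: B_def x2_def\<close>)
  then have "B t < x2 t" using \<open>t \<in> {0..T}\<close> by simp
  moreover have "x2 0 * lower_gain * exp (rate / 2 * t) \<le> B t"
  proof -
    have "- 2 * wdev_max \<le> wdev t - wdev 0"
      using abs_wdev_le_wdev_max[of t] abs_wdev_le_wdev_max[of 0] \<open>t \<in> {0..T}\<close> by auto
    then have "(b2 * d2) * (- 2 * wdev_max) \<le> (b2 * d2) * (wdev t - wdev 0)"
      using pos by (intro mult_left_mono) auto
    then have "exp (rate / 2 * t - 2 * b2 * d2 * wdev_max) \<le> exp (rate / 2 * t + b2 * d2 * (wdev t - wdev 0))"
      by simp
    then have "(x2 0 / 2) * exp (rate / 2 * t - 2 * b2 * d2 * wdev_max) \<le> B t"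
      unfolding B_def using start by (intro mult_left_mono) (auto simp: x2_def)
    moreover have "exp (rate / 2 * t - 2 * b2 * d2 * wdev_max) = exp (- 2 * b2 * d2 * wdev_max) * exp (rate / 2 * t)"
      by (simp add: algebra_simps flip: exp_add)
    ultimately show ?thesis unfolding lower_gain_def by simp
  qed
  ultimately show ?thesis unfolding x2_def by simp
qed

lemma truncated_solution_leaves_eps_ball:
  assumes X: "solves_on F_trunc X {0..}" and start: "0 < fst (snd (X 0))"
  shows "\<exists>t1\<ge>0. eps \<le> norm (X t1 - per_sol t1)"
proof (rule ccontr)
  assume "\<not> ?thesis"
  then have small: "norm (X s - per_sol s) < eps" if "0 \<le> s" for s using that by (meson not_le)
  define v0 where "v0 = fst (snd (X 0))"
  define t where "t = \<bar>ln (eps / (v0 * lower_gain))\<bar> / (rate / 2)"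
  have "0 \<le> t" unfolding t_def using growth_constants(1) by simp
  have "solves_on F X {0..t}"
  proof (rule truncated_solves_F[OF X order_refl])
    show "norm (X s - per_sol s) \<le> 1" if "s \<in> {0..t}" for s
      using small[of s] that growth_constants(3) by simp
  qed auto
  then have "v0 * lower_gain * exp (rate / 2 * t) \<le> fst (snd (X t))"
    unfolding v0_def using start small \<open>0 \<le> t\<close> by (intro growth_estimate) (auto intro: less_imp_le)
  moreover have "eps \<le> v0 * lower_gain * exp (rate / 2 * t)"
  proof -
    have "ln (eps / (v0 * lower_gain)) \<le> rate / 2 * t" unfolding t_def using growth_constants(1) by simp
    then have "exp (ln (eps / (v0 * lower_gain))) \<le> exp (rate / 2 * t)" by simp
    then have "eps / (v0 * lower_gain) \<le> exp (rate / 2 * t)"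
      using growth_constants(2,5) start v0_def by simp
    then show ?thesis using growth_constants(5) start v0_def by (simp add: field_simps)
  qed
  moreover have "\<bar>fst (snd (X t))\<bar> \<le> norm (X t - per_sol t)"
    unfolding diff_per_sol by (rule abs_le_norm_4tuple)
  ultimately show False using small[OF \<open>0 \<le> t\<close>] by linarith
qed

lemma lyap_unstable_per_sol: "lyap_unstable F per_sol"
proof -
  have "\<exists>x T. solves_on F x {0..T} \<and> norm (x 0 - per_sol 0) < \<delta>
      \<and> (\<exists>t\<in>{0..T}. eps \<le> norm (x t - per_sol t))" if "0 < \<delta>" for \<delta>
  proof -
    define v0 where "v0 = min (\<delta> / 2) (eps / 2)"
    have v0: "0 < v0" "v0 < \<delta>" "v0 < eps" using that growth_constants(2) by (auto simp: v0_def)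
    obtain X where X0: "X 0 = (1, v0, 0, w 0)" and X: "solves_on F_trunc X {0..}"
      using truncated_solution_exists[of 0] by blast
    have start: "norm (X 0 - per_sol 0) = v0" using v0 X0 by (simp add: per_sol_def)
    obtain t1 where "0 \<le> t1" "eps \<le> norm (X t1 - per_sol t1)"
      using truncated_solution_leaves_eps_ball[OF X] X0 v0 by auto
    moreover have "norm (X 0 - per_sol 0) < eps" using start v0 by simp
    ultimately obtain T where "0 < T" "norm (X T - per_sol T) = eps" "solves_on F X {0..T}"
      using truncated_solution_exit[OF X order_refl growth_constants(3)] by blast
    then show ?thesis using start v0 by (intro exI[of _ X] exI[of _ T] conjI bexI[of _ T]) auto
  qed
  then show ?thesis unfolding lyap_unstable_def using growth_constants(2) by blast
qed

end

theorem mainTheorem5: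
  fixes a1 a2 b2 b3 b4 d1 d2 d4 \<rho> iM :: real
    and i w :: "real \<Rightarrow> real"
  assumes pos: "a1 > 0" "a2 > 0" "b2 > 0" "b3 > 0" "b4 > 0" "d1 > 0" "d2 > 0" "d4 > 0"
    and rho: "\<rho> > 0"
    and i_cont: "continuous_on {0..} i"
    and i_range: "\<forall>t\<ge>0. 0 \<le> i t \<and> i t \<le> iM"
    and i_per: "\<forall>t\<ge>0. i (t + \<rho>) = i t"
    and i_mean: "(1 / \<rho>) * integral {0..\<rho>} i = 1"
    and w_ode: "\<forall>t\<ge>0. (w has_real_derivative b4 * (i t - w t)) (at t within {0..})"
    and w_per: "\<forall>t\<ge>0. w (t + \<rho>) = w t"
  shows "solves_on (sysF a1 a2 b2 b3 b4 d1 d2 d4 i) (\<lambda>t. (1, 0, 0, w t)) {0..}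
         \<and> (\<forall>t\<ge>0. (\<lambda>t. (1::real, 0::real, 0::real, w t)) (t + \<rho>) = (1, 0, 0, w t))
         \<and> (a2 + d2 > 1 \<longrightarrow> unif_asym_stable (sysF a1 a2 b2 b3 b4 d1 d2 d4 i) (\<lambda>t. (1, 0, 0, w t)))
         \<and> (a2 + d2 < 1 \<longrightarrow> lyap_unstable (sysF a1 a2 b2 b3 b4 d1 d2 d4 i) (\<lambda>t. (1, 0, 0, w t)))"
proof -
  interpret forced_system a1 a2 b2 b3 b4 d1 d2 d4 \<rho> i w
    using assms by unfold_locales auto
  have per_sol: "(\<lambda>t. (1, 0, 0, w t)) = per_sol" by (simp add: fun_eq_iff per_sol_def)
  have "unif_asym_stable F per_sol" if "a2 + d2 > 1"
  proof -
    interpret stable_regime a1 a2 b2 b3 b4 d1 d2 d4 \<rho> i w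
      using forced_system_axioms that by (simp add: stable_regime_def stable_regime_axioms_def)
    show ?thesis by (rule unif_asym_stable_per_sol)
  qed
  moreover have "lyap_unstable F per_sol" if "a2 + d2 < 1"
  proof -
    interpret unstable_regime a1 a2 b2 b3 b4 d1 d2 d4 \<rho> i w
      using forced_system_axioms that by (simp add: unstable_regime_def unstable_regime_axioms_def)
    show ?thesis by (rule lyap_unstable_per_sol)
  qed
  ultimately show ?thesis using per_sol_solves w_per unfolding per_sol by simp
qed

end
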